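(* Consider the procedures $\mathrm{Solve}_\mathsf{E}$ and $\mathrm{Solve}_\mathsf{O}$ defined in the context (Algorithm 1). Let $G$ be a subgame, $p_\mathsf{E},p_\mathsf{O}$ positive integers, and $d$ a nonnegative integer not smaller than the maximal priority in $G$. If $d$ is even, the set returned by $\mathrm{Solve}_\mathsf{E}(G,d,p_\mathsf{E},p_\mathsf{O})$ (i) is $\mathsf{E}$-closed in $G$; (ii) contains every dominion of Even in $G$ of size at most $p_\mathsf{E}$; and (iii) is disjoint from every dominion of Odd in $G$ of size at most $p_\mathsf{O}$. If $d$ is odd, the set returned by $\mathrm{Solve}_\mathsf{O}(G,d,p_\mathsf{O},p_\mathsf{E})$ (i) is $\mathsf{O}$-closed in $G$; (ii) contains every dominion of Odd in $G$ of size at most $p_\mathsf{O}$; and (iii) is disjoint from every dominion of Even in $G$ of size at most $p_\mathsf{E}$.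
   Context: A parity game is $\mathcal{G}=(V,V_\mathsf{E},E,\pi)$: $(V,E)$ a finite directed graph without self-loops, every vertex having a successor; $\pi\colon V\to\{1,\dots,d\}$ positive priorities; $V_\mathsf{E}$ Even's vertices, $V_\mathsf{O}=V\setminus V_\mathsf{E}$ Odd's vertices. A play is won by Even iff the highest priority seen infinitely often is even, else by Odd. A subgame is given by $G\subseteq V$ in which every vertex has a successor in $G$ (restrict $\mathcal{G}$ to $G$). A dominion of player $\wp$ in $G$ is $D\subseteq G$ such that from every $v\in D$, $\wp$ has a winning strategy in $G$ agreeing only with plays staying forever in $D$. $\mathrm{Attr}_\wp(S,G)$ is the set of vertices from which $\wp$ has a strategy in $G$ agreeing only with plays reaching $S$. $S\subseteq G$ is $\wp$-closed in $G$ if $\mathrm{Attr}_{\bar\wp}(G\setminus S,G)=G\setminus S$ ($\bar\wp$ the opponent of $\wp$). Algorithm 1. $\mathrm{Solve}_\mathsf{E}(G,d,p_\mathsf{E},p_\mathsf{O})$ (for even $d$): if $G=\emptyset$ or $p_\mathsf{O}\le 1$, return $G$. Otherwise: $G_1:=\mathrm{Solve}_\mathsf{E}(G,d,p_\mathsf{E},\lfloor p_\mathsf{O}/2\rfloor)$; $N_d:=\{v\in G_1:\pi(v)=d\}$; $H:=G_1\setminus\mathrm{Attr}_\mathsf{E}(N_d,G_1)$; $W_\mathsf{O}:=\mathrm{Solve}_\mathsf{O}(H,d-1,p_\mathsf{O},p_\mathsf{E})$; $G_2:=G_1\setminus\mathrm{Attr}_\mathsf{O}(W_\mathsf{O},G_1)$;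 $G_3:=\mathrm{Solve}_\mathsf{E}(G_2,d,p_\mathsf{E},\lfloor p_\mathsf{O}/2\rfloor)$; return $G_3$. $\mathrm{Solve}_\mathsf{O}(G,d,p_\mathsf{O},p_\mathsf{E})$ (for odd $d$) is the dual: if $G=\emptyset$ or $p_\mathsf{E}\le 1$, return $G$. Otherwise: $G_1:=\mathrm{Solve}_\mathsf{O}(G,d,p_\mathsf{O},\lfloor p_\mathsf{E}/2\rfloor)$; $N_d:=\{v\in G_1:\pi(v)=d\}$; $H:=G_1\setminus\mathrm{Attr}_\mathsf{O}(N_d,G_1)$; $W_\mathsf{E}:=\mathrm{Solve}_\mathsf{E}(H,d-1,p_\mathsf{E},p_\mathsf{O})$; $G_2:=G_1\setminus\mathrm{Attr}_\mathsf{E}(W_\mathsf{E},G_1)$; $G_3:=\mathrm{Solve}_\mathsf{O}(G_2,d,p_\mathsf{O},\lfloor p_\mathsf{E}/2\rfloor)$; return $G_3$. *)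

theory Defs
  imports Main
begin

datatype player = Even | Odd

fun opp :: "player \<Rightarrow> player" where
  "opp Even = Odd" | "opp Odd = Even"

record 'v pgame =
  verts :: "'v set"
  evens :: "'v set"
  edges :: "('v \<times> 'v) set"
  prio  :: "'v \<Rightarrow> nat"

definition parity_game :: "'v pgame \<Rightarrow> bool" where
  "parity_game g \<longleftrightarrow>
     finite (verts g) \<and> evens g \<subseteq> verts g \<and> edges g \<subseteq> verts g \<times> verts g \<and>
     (\<forall>v. (v, v) \<notin> edges g) \<and>
     (\<forall>v\<in>verts g. \<exists>w. (v, w) \<in> edges g) \<and>
     (\<forall>v\<in>verts g. 1 \<le> prio g v)"

definition owns :: "'v pgame \<Rightarrow> player \<Rightarrow> 'v \<Rightarrow> bool" where
  "owns g P v \<longleftrightarrow> v \<in> verts g \<and> (if P = Even then v \<in> evens g else v \<notin> evens g)"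

definition subgame :: "'v pgame \<Rightarrow> 'v set \<Rightarrow> bool" where
  "subgame g G \<longleftrightarrow> G \<subseteq> verts g \<and> (\<forall>v\<in>G. \<exists>w\<in>G. (v, w) \<in> edges g)"

definition strategy :: "'v pgame \<Rightarrow> player \<Rightarrow> 'v set \<Rightarrow> ('v list \<Rightarrow> 'v) \<Rightarrow> bool" where
  "strategy g P G \<sigma> \<longleftrightarrow>
     (\<forall>h. h \<noteq> [] \<and> set h \<subseteq> G \<and> owns g P (last h) \<and> (\<exists>w\<in>G. (last h, w) \<in> edges g)
          \<longrightarrow> \<sigma> h \<in> G \<and> (last h, \<sigma> h) \<in> edges g)"

definition play :: "'v pgame \<Rightarrow> 'v set \<Rightarrow> 'v \<Rightarrow> (nat \<Rightarrow> 'v) \<Rightarrow> bool" where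
  "play g G v \<rho> \<longleftrightarrow> \<rho> 0 = v \<and> (\<forall>i. \<rho> i \<in> G \<and> (\<rho> i, \<rho> (Suc i)) \<in> edges g)"

definition consistent :: "'v pgame \<Rightarrow> player \<Rightarrow> ('v list \<Rightarrow> 'v) \<Rightarrow> (nat \<Rightarrow> 'v) \<Rightarrow> bool" where
  "consistent g P \<sigma> \<rho> \<longleftrightarrow> (\<forall>i. owns g P (\<rho> i) \<longrightarrow> \<rho> (Suc i) = \<sigma> (map \<rho> [0..<Suc i]))"

definition inf_max_prio :: "'v pgame \<Rightarrow> (nat \<Rightarrow> 'v) \<Rightarrow> nat" where
  "inf_max_prio g \<rho> = Max {prio g v | v. infinite {i. \<rho> i = v}}"

definition wins :: "'v pgame \<Rightarrow> player \<Rightarrow> (nat \<Rightarrow> 'v) \<Rightarrow> bool" where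
  "wins g P \<rho> \<longleftrightarrow> (if P = Even then even (inf_max_prio g \<rho>) else odd (inf_max_prio g \<rho>))"

definition dominion :: "'v pgame \<Rightarrow> player \<Rightarrow> 'v set \<Rightarrow> 'v set \<Rightarrow> bool" where
  "dominion g P D G \<longleftrightarrow> D \<subseteq> G \<and>
     (\<forall>v\<in>D. \<exists>\<sigma>. strategy g P G \<sigma> \<and>
        (\<forall>\<rho>. play g G v \<rho> \<and> consistent g P \<sigma> \<rho> \<longrightarrow> (\<forall>i. \<rho> i \<in> D) \<and> wins g P \<rho>))"

definition attr :: "'v pgame \<Rightarrow> player \<Rightarrow> 'v set \<Rightarrow> 'v set \<Rightarrow> 'v set" where
  "attr g P S G = {v \<in> G. \<exists>\<sigma>. strategy g P G \<sigma> \<and>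
     (\<forall>\<rho>. play g G v \<rho> \<and> consistent g P \<sigma> \<rho> \<longrightarrow> (\<exists>i. \<rho> i \<in> S))}"

definition closed :: "'v pgame \<Rightarrow> player \<Rightarrow> 'v set \<Rightarrow> 'v set \<Rightarrow> bool" where
  "closed g P S G \<longleftrightarrow> attr g (opp P) (G - S) G = G - S"

text \<open>The extra guard d = 0
  only makes the function total; under the hypothesis that all priorities in G are
  positive and at most d, d = 0 forces G = {} anyway.\<close>
fun solve :: "'v pgame \<Rightarrow> player \<Rightarrow> 'v set \<Rightarrow> nat \<Rightarrow> nat \<Rightarrow> nat \<Rightarrow> 'v set" where
  "solve g P G d pme pop =
    (if G = {} \<or> pop \<le> 1 \<or> d = 0 then G
     else
       (let G1 = solve g P G d pme (pop div 2);
            Nd = {v \<in> G1. prio g v = d};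
            H  = G1 - attr g P Nd G1;
            W  = solve g (opp P) H (d - 1) pop pme;
            G2 = G1 - attr g (opp P) W G1
        in solve g P G2 d pme (pop div 2)))"

definition Solve_E :: "'v pgame \<Rightarrow> 'v set \<Rightarrow> nat \<Rightarrow> nat \<Rightarrow> nat \<Rightarrow> 'v set" where
  "Solve_E g G d pE pO = solve g Even G d pE pO"

definition Solve_O :: "'v pgame \<Rightarrow> 'v set \<Rightarrow> nat \<Rightarrow> nat \<Rightarrow> nat \<Rightarrow> 'v set" where
  "Solve_O g G d pO pE = solve g Odd G d pO pE"

end

theory Submission
  imports Defs "HOL-Library.Infinite_Set"
begin

text \<open>
  The three properties are proved together by induction along the recursion, with closedness
  strengthened to being a trap: the player can always stay inside, the opponent can never leave.
  Traps are transitive and complements of attractors are traps, which gives (i).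
  A small dominion \<open>D\<close> of the player survives the first call, is disjoint from the result \<open>W\<close>
  of the inner call, hence cannot be attracted to \<open>W\<close> and survives into the third call (ii).
  For (iii), the top priority \<open>d\<close> is bad for the opponent, so every nonempty opponent dominion
  contains a nonempty opponent dominion avoiding the player's attractor of priority \<open>d\<close>.
  Exhausting a small opponent dominion \<open>D\<close> by a growing chain of attractor-closed opponent
  dominions, each new piece lands in \<open>W\<close>; as long as the chain is at most half the budget it
  avoids the first result, and once it is larger, what is left of \<open>D\<close> in \<open>G2\<close> is small enough
  for the third call.
\<close>

section \<open>Strategies, histories and plays\<close>

lemma opp_opp [simp]: "opp (opp P) = P"
  by (cases P) auto

lemma owns_opp: "v \<in> verts g \<Longrightarrow> owns g (opp P) v \<longleftrightarrow> \<not> owns g P v"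
  by (cases P) (auto simp: owns_def)

lemma subgame_verts: "subgame g K \<Longrightarrow> K \<subseteq> verts g"
  by (simp add: subgame_def)

lemma subgame_successor: "subgame g K \<Longrightarrow> v \<in> K \<Longrightarrow> \<exists>w\<in>K. (v, w) \<in> edges g"
  by (simp add: subgame_def)

definition legalize :: "'v pgame \<Rightarrow> 'v set \<Rightarrow> ('v list \<Rightarrow> 'v) \<Rightarrow> 'v list \<Rightarrow> 'v" where
  "legalize g K f h =
     (if f h \<in> K \<and> (last h, f h) \<in> edges g then f h else (SOME w. w \<in> K \<and> (last h, w) \<in> edges g))"

lemma legalize_move:
  assumes "\<exists>w\<in>K. (last h, w) \<in> edges g"
  shows "legalize g K f h \<in> K \<and> (last h, legalize g K f h) \<in> edges g"
  using someI_ex[of "\<lambda>w. w \<in> K \<and> (last h, w) \<in> edges g"] assms by (auto simp: legalize_def)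

lemma strategy_legalize: "strategy g P K (legalize g K f)"
  by (simp add: strategy_def legalize_move)

lemma legalize_cong: "f h = f' h' \<Longrightarrow> last h = last h' \<Longrightarrow> legalize g K f h = legalize g K f' h'"
  by (simp add: legalize_def)

lemma strategy_move:
  assumes "subgame g K" "strategy g P K \<sigma>" "h \<noteq> []" "set h \<subseteq> K" "owns g P (last h)"
  shows "\<sigma> h \<in> K \<and> (last h, \<sigma> h) \<in> edges g"
proof -
  have "last h \<in> K" using assms(3,4) last_in_set by blast
  then show ?thesis using assms subgame_successor[OF assms(1)] unfolding strategy_def by blast
qed

lemma legalize_strategy:
  assumes "subgame g K" "strategy g P K \<sigma>" "h \<noteq> []" "set h \<subseteq> K" "owns g P (last h)"
  shows "legalize g K \<sigma> h = \<sigma> h"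
  using strategy_move[OF assms] by (simp add: legalize_def)

fun run_prefix :: "('v list \<Rightarrow> 'v) \<Rightarrow> 'v \<Rightarrow> nat \<Rightarrow> 'v list" where
  "run_prefix f v 0 = [v]"
| "run_prefix f v (Suc n) = run_prefix f v n @ [f (run_prefix f v n)]"

definition run :: "('v list \<Rightarrow> 'v) \<Rightarrow> 'v \<Rightarrow> nat \<Rightarrow> 'v" where
  "run f v i = run_prefix f v i ! i"

lemma length_run_prefix [simp]: "length (run_prefix f v n) = Suc n"
  by (induction n) auto

lemma run_prefix_nth: "i \<le> n \<Longrightarrow> run_prefix f v n ! i = run f v i"
  by (induction n) (auto simp: run_def nth_append le_Suc_eq)

lemma map_run: "map (run f v) [0..<Suc n] = run_prefix f v n"
  by (rule nth_equalityI) (auto simp: run_prefix_nth simp del: upt_Suc)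

lemma run_0 [simp]: "run f v 0 = v"
  by (simp add: run_def)

lemma run_Suc: "run f v (Suc i) = f (map (run f v) [0..<Suc i])"
  by (simp add: run_def map_run nth_append del: upt_Suc)

lemma last_map_upt_Suc [simp]: "last (map \<rho> [0..<Suc i]) = \<rho> i"
  by simp

lemma hd_map_upt_Suc [simp]: "hd (map \<rho> [0..<Suc i]) = \<rho> 0"
  by (simp add: hd_map del: upt_Suc)

definition consistent_path :: "'v pgame \<Rightarrow> 'v set \<Rightarrow> player \<Rightarrow> ('v list \<Rightarrow> 'v) \<Rightarrow> 'v list \<Rightarrow> bool" where
  "consistent_path g K P \<sigma> h \<longleftrightarrow> h \<noteq> [] \<and> set h \<subseteq> K \<and>
     (\<forall>j. Suc j < length h \<longrightarrow> (h ! j, h ! Suc j) \<in> edges g \<and>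
        (owns g P (h ! j) \<longrightarrow> h ! Suc j = \<sigma> (take (Suc j) h)))"

lemma consistent_path_singleton: "v \<in> K \<Longrightarrow> consistent_path g K P \<sigma> [v]"
  by (simp add: consistent_path_def)

lemma consistent_path_snoc:
  assumes "consistent_path g K P \<sigma> h" "w \<in> K" "(last h, w) \<in> edges g"
    and "owns g P (last h) \<Longrightarrow> w = \<sigma> h"
  shows "consistent_path g K P \<sigma> (h @ [w])"
proof -
  have "h \<noteq> []" using assms(1) by (simp add: consistent_path_def)
  then have "last h = h ! j" "take (Suc j) (h @ [w]) = h" if "Suc j = length h" for j
    using that by (metis diff_Suc_1 last_conv_nth, simp)
  then show ?thesis
    using assms by (auto simp: consistent_path_def nth_append less_Suc_eq)
qed

lemma consistent_path_take:
  "consistent_path g K P \<sigma> h \<Longrightarrow> 0 < n \<Longrightarrow> consistent_path g K P \<sigma> (take n h)"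
  by (auto simp: consistent_path_def min_def dest: in_set_takeD)

lemma consistent_path_prefixes_play:
  assumes "\<And>n. consistent_path g K P \<sigma> (map \<rho> [0..<Suc n])"
  shows "play g K (\<rho> 0) \<rho>" "consistent g P \<sigma> \<rho>"
proof -
  have "\<rho> i \<in> K \<and> (\<rho> i, \<rho> (Suc i)) \<in> edges g \<and>
      (owns g P (\<rho> i) \<longrightarrow> \<rho> (Suc i) = \<sigma> (map \<rho> [0..<Suc i]))" for i
    using assms[of "Suc i"] unfolding consistent_path_def
    by (auto simp: take_map min_def simp del: upt_Suc dest!: spec[of _ i])
  then show "play g K (\<rho> 0) \<rho>" "consistent g P \<sigma> \<rho>"
    by (auto simp: play_def consistent_def)
qed

lemma consistent_path_extends_to_play:
  assumes sg: "subgame g K" and \<sigma>: "strategy g P K \<sigma>" and h: "consistent_path g K P \<sigma> h"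
  obtains \<rho> where "play g K (hd h) \<rho>" "consistent g P \<sigma> \<rho>" "\<forall>j<length h. \<rho> j = h ! j"
proof -
  define f where "f h' = (if length h' < length h then h ! length h' else legalize g K \<sigma> h')" for h'
  define \<rho> where "\<rho> = run f (hd h)"
  have ne: "h \<noteq> []" and hK: "set h \<subseteq> K" using h by (auto simp: consistent_path_def)
  have \<rho>_Suc: "\<rho> (Suc i) = f (map \<rho> [0..<Suc i])" for i
    by (simp add: \<rho>_def run_Suc del: upt_Suc)
  have prefix: "\<rho> j = h ! j" if "j < length h" for j
    using that by (induction j) (simp_all add: \<rho>_def ne hd_conv_nth run_Suc f_def del: upt_Suc)
  have step: "\<rho> (Suc i) \<in> K \<and> (\<rho> i, \<rho> (Suc i)) \<in> edges g \<and>
      (owns g P (\<rho> i) \<longrightarrow> \<rho> (Suc i) = \<sigma> (map \<rho> [0..<Suc i]))"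
    if inK: "\<forall>j\<le>i. \<rho> j \<in> K" for i
  proof (cases "Suc i < length h")
    case True
    have "take (Suc i) h = map \<rho> [0..<Suc i]"
      using True prefix by (intro nth_equalityI) (auto simp del: upt_Suc)
    then show ?thesis
      using h True prefix[of i] prefix[of "Suc i"] hK nth_mem[OF True] by (auto simp: consistent_path_def)
  next
    case False
    let ?p = "map \<rho> [0..<Suc i]"
    have p: "?p \<noteq> []" "set ?p \<subseteq> K" "last ?p = \<rho> i" using inK by (auto simp del: upt_Suc)
    have "\<rho> (Suc i) = legalize g K \<sigma> ?p" using False by (simp add: \<rho>_Suc f_def del: upt_Suc)
    then show ?thesis
      using legalize_move[of K ?p g \<sigma>] legalize_strategy[OF sg \<sigma> p(1,2)]
        subgame_successor[OF sg, of "\<rho> i"] p inK by auto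
  qed
  have "\<forall>j\<le>i. \<rho> j \<in> K" for i
    by (induction i) (use step ne hK in \<open>auto simp: \<rho>_def le_Suc_eq\<close>)
  then have "play g K (hd h) \<rho>" "consistent g P \<sigma> \<rho>"
    using step by (auto simp: play_def consistent_def \<rho>_def)
  with prefix show ?thesis using that by blast
qed

lemma consistent_path_stays:
  assumes "subgame g K" "strategy g P K \<sigma>" "consistent_path g K P \<sigma> h"
    and "\<forall>\<rho>. play g K (hd h) \<rho> \<and> consistent g P \<sigma> \<rho> \<longrightarrow> (\<forall>i. \<rho> i \<in> Z)"
  shows "set h \<subseteq> Z"
proof
  fix x assume "x \<in> set h"
  then obtain j where "j < length h" "x = h ! j" by (auto simp: in_set_conv_nth)
  with consistent_path_extends_to_play[OF assms(1-3)] assms(4) show "x \<in> Z" by metis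
qed

lemma wins_shift: "wins g P (\<lambda>i. \<rho> (i + k)) = wins g P \<rho>"
proof -
  have "infinite {i. \<rho> (i + k) = v} \<longleftrightarrow> infinite {i. \<rho> i = v}" for v
    using eventually_sequentially_seg[of "\<lambda>i. \<rho> i \<noteq> v" k]
    by (simp add: frequently_cofinite[symmetric] cofinite_eq_sequentially frequently_def)
  then show ?thesis by (simp add: wins_def inf_max_prio_def)
qed

definition forces :: "'v pgame \<Rightarrow> player \<Rightarrow> 'v set \<Rightarrow> 'v \<Rightarrow> ((nat \<Rightarrow> 'v) \<Rightarrow> bool) \<Rightarrow> bool" where
  "forces g P K v \<Phi> \<longleftrightarrow>
     (\<exists>\<sigma>. strategy g P K \<sigma> \<and> (\<forall>\<rho>. play g K v \<rho> \<and> consistent g P \<sigma> \<rho> \<longrightarrow> \<Phi> \<rho>))"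

lemma dominion_iff_forces:
  "dominion g P D K \<longleftrightarrow> D \<subseteq> K \<and> (\<forall>v\<in>D. forces g P K v (\<lambda>\<rho>. (\<forall>i. \<rho> i \<in> D) \<and> wins g P \<rho>))"
  by (simp add: dominion_def forces_def)

lemma attr_iff_forces: "attr g P S K = {v \<in> K. forces g P K v (\<lambda>\<rho>. \<exists>i. \<rho> i \<in> S)}"
  by (simp add: attr_def forces_def)

lemma forces_mono:
  "forces g P K v \<Phi> \<Longrightarrow> (\<And>\<rho>. play g K v \<rho> \<Longrightarrow> \<Phi> \<rho> \<Longrightarrow> \<Psi> \<rho>) \<Longrightarrow> forces g P K v \<Psi>"
  unfolding forces_def by blast

lemma consistent_prefix:
  assumes sg: "subgame g K" and \<rho>: "play g K v \<rho>" "consistent g P (legalize g K f) \<rho>"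
    and \<sigma>: "strategy g P K \<sigma>"
    and f: "\<And>i. i < k \<Longrightarrow> owns g P (\<rho> i) \<Longrightarrow> f (map \<rho> [0..<Suc i]) = \<sigma> (map \<rho> [0..<Suc i])"
  shows "consistent_path g K P \<sigma> (map \<rho> [0..<Suc k])"
proof -
  have "\<rho> (Suc i) = \<sigma> (map \<rho> [0..<Suc i])" if "i < k" "owns g P (\<rho> i)" for i
  proof -
    have "\<rho> (Suc i) = legalize g K \<sigma> (map \<rho> [0..<Suc i])"
      using \<rho>(2) that f[OF that] by (simp add: consistent_def legalize_def del: upt_Suc)
    also have "\<dots> = \<sigma> (map \<rho> [0..<Suc i])"
      using \<rho>(1) that by (intro legalize_strategy[OF sg \<sigma>]) (auto simp: play_def simp del: upt_Suc)
    finally show ?thesis .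
  qed
  then show ?thesis
    using \<rho>(1) by (auto simp: consistent_path_def play_def take_map min_def simp del: upt_Suc)
qed

lemma consistent_suffix:
  assumes sg: "subgame g K" and \<rho>: "play g K v \<rho>" "consistent g P (legalize g K f) \<rho>"
    and \<tau>: "strategy g P K \<tau>"
    and f: "\<And>i. k \<le> i \<Longrightarrow> owns g P (\<rho> i) \<Longrightarrow>
      f (map \<rho> [0..<Suc i]) = \<tau> (map (\<lambda>j. \<rho> (j + k)) [0..<Suc (i - k)])"
  shows "consistent g P \<tau> (\<lambda>j. \<rho> (j + k))"
  unfolding consistent_def
proof (intro allI impI)
  fix j assume own: "owns g P (\<rho> (j + k))"
  let ?s = "map (\<lambda>j. \<rho> (j + k)) [0..<Suc j]"
  have "\<rho> (Suc j + k) = legalize g K f (map \<rho> [0..<Suc (j + k)])"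
    using \<rho>(2) own by (simp add: consistent_def del: upt_Suc)
  also have "\<dots> = legalize g K \<tau> ?s"
    using f[of "j + k"] own by (intro legalize_cong) (simp_all del: upt_Suc)
  also have "\<dots> = \<tau> ?s"
    using \<rho>(1) own by (intro legalize_strategy[OF sg \<tau>]) (auto simp: play_def simp del: upt_Suc)
  finally show "\<rho> (Suc j + k) = \<tau> ?s" .
qed

section \<open>Traps and attractors\<close>

text \<open>Oriented like \<open>closed g P T K\<close>: player \<open>P\<close> can stay in \<open>T\<close>, the opponent cannot leave it.\<close>

definition trap :: "'v pgame \<Rightarrow> player \<Rightarrow> 'v set \<Rightarrow> 'v set \<Rightarrow> bool" where
  "trap g P T K \<longleftrightarrow> T \<subseteq> K \<and> (\<forall>v\<in>T.
     (owns g P v \<longrightarrow> (\<exists>w\<in>T. (v, w) \<in> edges g)) \<and>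
     (\<not> owns g P v \<longrightarrow> (\<forall>w\<in>K. (v, w) \<in> edges g \<longrightarrow> w \<in> T)))"

lemma trap_subset: "trap g P T K \<Longrightarrow> T \<subseteq> K"
  by (simp add: trap_def)

lemma trap_refl: "subgame g K \<Longrightarrow> trap g P K K"
  by (auto simp: trap_def subgame_def)

lemma trap_trans: "trap g P T2 T1 \<Longrightarrow> trap g P T1 T0 \<Longrightarrow> trap g P T2 T0"
  unfolding trap_def by blast

lemma trap_subgame: "subgame g K \<Longrightarrow> trap g P T K \<Longrightarrow> subgame g T"
  unfolding trap_def subgame_def by blast

lemma trap_inter:
  assumes "K \<subseteq> verts g" "trap g P T K" "trap g (opp P) D K"
  shows "trap g P (T \<inter> D) D"
  unfolding trap_def
proof (intro conjI ballI impI)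
  fix v assume v: "v \<in> T \<inter> D"
  have "v \<in> verts g" using v assms by (auto simp: trap_def)
  then have opp: "owns g (opp P) v \<longleftrightarrow> \<not> owns g P v" by (rule owns_opp)
  show "\<exists>w\<in>T \<inter> D. (v, w) \<in> edges g" if "owns g P v"
    using assms(2,3) v that opp unfolding trap_def by blast
  show "w \<in> T \<inter> D" if "\<not> owns g P v" "w \<in> D" "(v, w) \<in> edges g" for w
    using assms(2,3) v that unfolding trap_def by blast
qed simp

lemma dominion_imp_trap:
  assumes sg: "subgame g K" and dom: "dominion g P Z K"
  shows "trap g P Z K"
  unfolding trap_def
proof (intro conjI ballI impI)
  show "Z \<subseteq> K" using dom by (simp add: dominion_def)
next
  fix v assume v: "v \<in> Z"
  then obtain \<sigma> where \<sigma>: "strategy g P K \<sigma>"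
    and stay: "\<forall>\<rho>. play g K v \<rho> \<and> consistent g P \<sigma> \<rho> \<longrightarrow> (\<forall>i. \<rho> i \<in> Z)"
    using dom by (auto simp: dominion_def)
  have vK: "v \<in> K" using dom v by (auto simp: dominion_def)
  have step: "w \<in> Z" if "w \<in> K" "(v, w) \<in> edges g" "owns g P v \<Longrightarrow> w = \<sigma> [v]" for w
    using consistent_path_stays[OF sg \<sigma>, of "[v, w]"] consistent_path_snoc[of g K P \<sigma> "[v]" w]
      consistent_path_singleton[OF vK] stay that by simp
  show "\<exists>w\<in>Z. (v, w) \<in> edges g" if "owns g P v"
    using strategy_move[OF sg \<sigma>, of "[v]"] step that vK by auto
  show "w \<in> Z" if "\<not> owns g P v" "w \<in> K" "(v, w) \<in> edges g" for w
    using step that by blast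
qed

lemma trap_play:
  assumes sg: "subgame g K" and T: "trap g P T K" and \<sigma>: "strategy g (opp P) K \<sigma>" and v: "v \<in> T"
  obtains \<rho> where "play g K v \<rho>" "consistent g (opp P) \<sigma> \<rho>" "\<forall>i. \<rho> i \<in> T"
proof -
  define \<rho> where "\<rho> = run (legalize g T \<sigma>) v"
  have TK: "T \<subseteq> K" using T by (rule trap_subset)
  have step: "\<rho> (Suc i) \<in> T \<and> (\<rho> i, \<rho> (Suc i)) \<in> edges g \<and>
      (owns g (opp P) (\<rho> i) \<longrightarrow> \<rho> (Suc i) = \<sigma> (map \<rho> [0..<Suc i]))"
    if inT: "\<forall>j\<le>i. \<rho> j \<in> T" for i
  proof -
    let ?p = "map \<rho> [0..<Suc i]"
    have \<rho>_Suc: "\<rho> (Suc i) = legalize g T \<sigma> ?p" by (simp add: \<rho>_def run_Suc del: upt_Suc)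
    have p: "?p \<noteq> []" "set ?p \<subseteq> K" "\<rho> i \<in> T" "\<rho> i \<in> verts g"
      using inT TK subgame_verts[OF sg] by (auto simp del: upt_Suc)
    show ?thesis
    proof (cases "owns g (opp P) (\<rho> i)")
      case True
      then have "\<sigma> ?p \<in> T" "(\<rho> i, \<sigma> ?p) \<in> edges g"
        using strategy_move[OF sg \<sigma> p(1,2)] T p owns_opp[of "\<rho> i" g P] unfolding trap_def by auto
      then show ?thesis using \<rho>_Suc TK by (auto simp: legalize_def)
    next
      case False
      then have "\<exists>w\<in>T. (\<rho> i, w) \<in> edges g" using T p owns_opp[of "\<rho> i" g P] unfolding trap_def by auto
      then show ?thesis using legalize_move[of T ?p g \<sigma>] \<rho>_Suc False by auto
    qed
  qed
  have "\<forall>j\<le>i. \<rho> j \<in> T" for i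
    by (induction i) (use step v in \<open>auto simp: \<rho>_def le_Suc_eq\<close>)
  then have "play g K v \<rho>" "consistent g (opp P) \<sigma> \<rho>" "\<forall>i. \<rho> i \<in> T"
    using step TK by (auto simp: play_def consistent_def \<rho>_def)
  then show ?thesis using that by blast
qed

lemma drop_map_upt:
  "k \<le> i \<Longrightarrow> drop k (map \<rho> [0..<Suc i]) = map (\<lambda>j. \<rho> (j + k)) [0..<Suc (i - k)]"
  by (rule nth_equalityI) (auto simp: add.commute simp del: upt_Suc)

lemma forces_after_first_move:
  assumes sg: "subgame g K" and v: "v \<in> K"
    and own: "owns g P v \<Longrightarrow> \<exists>w\<in>K. (v, w) \<in> edges g \<and> forces g P K w \<Phi>"
    and other: "\<not> owns g P v \<Longrightarrow> \<forall>w\<in>K. (v, w) \<in> edges g \<longrightarrow> forces g P K w \<Phi>"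
  shows "forces g P K v (\<lambda>\<rho>. \<Phi> (\<lambda>i. \<rho> (i + 1)))"
proof -
  define T where "T w = (SOME \<tau>. strategy g P K \<tau> \<and> (\<forall>\<rho>. play g K w \<rho> \<and> consistent g P \<tau> \<rho> \<longrightarrow> \<Phi> \<rho>))"
    for w
  have T: "strategy g P K (T w) \<and> (\<forall>\<rho>. play g K w \<rho> \<and> consistent g P (T w) \<rho> \<longrightarrow> \<Phi> \<rho>)"
    if "forces g P K w \<Phi>" for w
    using that unfolding forces_def T_def by (rule someI_ex)
  obtain w0 where w0: "owns g P v \<longrightarrow> w0 \<in> K \<and> (v, w0) \<in> edges g \<and> forces g P K w0 \<Phi>"
    using own by blast
  define f where "f h = (if length h \<le> 1 then w0 else T (h ! 1) (drop 1 h))" for h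
  show ?thesis unfolding forces_def
  proof (intro exI conjI allI impI)
    show "strategy g P K (legalize g K f)" by (rule strategy_legalize)
    fix \<rho> assume \<rho>: "play g K v \<rho> \<and> consistent g P (legalize g K f) \<rho>"
    then have \<rho>0: "\<rho> 0 = v" and \<rho>1: "\<rho> 1 \<in> K" "(v, \<rho> 1) \<in> edges g"
      by (auto simp: play_def dest: spec[of _ 0])
    have "forces g P K (\<rho> 1) \<Phi>"
    proof (cases "owns g P v")
      case True
      then have "\<rho> 1 = legalize g K f [v]" using \<rho> \<rho>0 by (auto simp: consistent_def dest: spec[of _ 0])
      also have "\<dots> = w0" using w0 True by (simp add: legalize_def f_def)
      finally show ?thesis using w0 True by simp
    qed (use other \<rho>1 in blast)
    then have \<tau>: "strategy g P K (T (\<rho> 1))" and win: "\<forall>\<rho>'. play g K (\<rho> 1) \<rho>' \<and> consistent g P (T (\<rho> 1)) \<rho>' \<longrightarrow> \<Phi> \<rho>'"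
      using T by blast+
    have "consistent g P (T (\<rho> 1)) (\<lambda>j. \<rho> (j + 1))"
      using \<rho> by (intro consistent_suffix[OF sg _ _ \<tau>])
        (auto simp: f_def drop_map_upt simp del: upt_Suc)
    moreover have "play g K (\<rho> 1) (\<lambda>j. \<rho> (j + 1))" using \<rho> by (simp add: play_def)
    ultimately show "\<Phi> (\<lambda>i. \<rho> (i + 1))" using win by blast
  qed
qed

inductive_set attractor :: "'v pgame \<Rightarrow> player \<Rightarrow> 'v set \<Rightarrow> 'v set \<Rightarrow> 'v set"
  for g :: "'v pgame" and P :: player and S :: "'v set" and K :: "'v set" where
  base: "v \<in> S \<Longrightarrow> v \<in> K \<Longrightarrow> v \<in> attractor g P S K"
| own: "v \<in> K \<Longrightarrow> owns g P v \<Longrightarrow> w \<in> K \<Longrightarrow> (v, w) \<in> edges g \<Longrightarrow> w \<in> attractor g P S K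
    \<Longrightarrow> v \<in> attractor g P S K"
| other: "v \<in> K \<Longrightarrow> \<not> owns g P v \<Longrightarrow> \<forall>w\<in>K. (v, w) \<in> edges g \<longrightarrow> w \<in> attractor g P S K
    \<Longrightarrow> v \<in> attractor g P S K"

lemma attractor_subset: "attractor g P S K \<subseteq> K"
  by (auto elim: attractor.cases)

lemma attractor_forces:
  assumes sg: "subgame g K" and v: "v \<in> attractor g P S K"
  shows "forces g P K v (\<lambda>\<rho>. \<exists>k. \<rho> k \<in> S \<and> (\<forall>i\<le>k. \<rho> i \<in> attractor g P S K))"
  using v
proof (induction rule: attractor.induct)
  case (base v)
  have "\<exists>k. \<rho> k \<in> S \<and> (\<forall>i\<le>k. \<rho> i \<in> attractor g P S K)" if "play g K v \<rho>" for \<rho>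
    using that base attractor.base[of v S K g P] by (intro exI[of _ 0]) (simp add: play_def)
  then show ?case using strategy_legalize unfolding forces_def by blast
next
  let ?A = "attractor g P S K"
  have delay: "forces g P K v (\<lambda>\<rho>. \<exists>k. \<rho> k \<in> S \<and> (\<forall>i\<le>k. \<rho> i \<in> ?A))"
    if "v \<in> ?A" "forces g P K v (\<lambda>\<rho>. \<exists>k. \<rho> (k + 1) \<in> S \<and> (\<forall>i\<le>k. \<rho> (i + 1) \<in> ?A))" for v
    using that(2)
  proof (rule forces_mono)
    fix \<rho> assume "play g K v \<rho>" and "\<exists>k. \<rho> (k + 1) \<in> S \<and> (\<forall>i\<le>k. \<rho> (i + 1) \<in> ?A)"
    then obtain k where "\<rho> 0 = v" "\<rho> (Suc k) \<in> S" "\<forall>i\<le>k. \<rho> (Suc i) \<in> ?A" by (auto simp: play_def)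
    moreover have "\<rho> i \<in> ?A" if "i \<le> Suc k" for i
      using that \<open>v \<in> ?A\<close> calculation by (cases i) auto
    ultimately show "\<exists>k. \<rho> k \<in> S \<and> (\<forall>i\<le>k. \<rho> i \<in> ?A)" by blast
  qed
  {
    case (own v w)
    have "v \<in> ?A" using own.hyps by (rule attractor.own)
    moreover have "forces g P K v (\<lambda>\<rho>. \<exists>k. \<rho> (k + 1) \<in> S \<and> (\<forall>i\<le>k. \<rho> (i + 1) \<in> ?A))"
      using own.hyps own.IH by (intro forces_after_first_move[OF sg]) blast+
    ultimately show ?case by (rule delay)
  next
    case (other v)
    have "v \<in> ?A" using other.hyps(1,2) other.IH by (intro attractor.other) blast+
    moreover have "forces g P K v (\<lambda>\<rho>. \<exists>k. \<rho> (k + 1) \<in> S \<and> (\<forall>i\<le>k. \<rho> (i + 1) \<in> ?A))"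
      using other.hyps other.IH by (intro forces_after_first_move[OF sg]) blast+
    ultimately show ?case by (rule delay)
  }
qed

lemma attractor_idem: "attractor g P (attractor g P S K) K = attractor g P S K"
proof (intro equalityI subsetI)
  fix v assume "v \<in> attractor g P (attractor g P S K) K"
  then show "v \<in> attractor g P S K"
  proof (induction rule: attractor.induct)
    case (base v)
    then show ?case by simp
  next
    case (own v w)
    from own.hyps(1-4) own.IH show ?case by (rule attractor.own)
  next
    case (other v)
    have "\<forall>w\<in>K. (v, w) \<in> edges g \<longrightarrow> w \<in> attractor g P S K" using other.IH by simp
    with other.hyps show ?case by (rule attractor.other)
  qed
next
  fix v assume v: "v \<in> attractor g P S K"
  then have "v \<in> K" using attractor_subset[of g P S K] by blast
  with v show "v \<in> attractor g P (attractor g P S K) K" by (rule attractor.base)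
qed

lemma attractor_empty:
  assumes sg: "subgame g K"
  shows "attractor g P {} K = {}"
proof -
  have False if "v \<in> attractor g P {} K" for v
    using that
  proof (induction rule: attractor.induct)
    case (other v)
    then obtain w where "w \<in> K" "(v, w) \<in> edges g" using subgame_successor[OF sg] by blast
    then show False using other.IH by blast
  qed auto
  then show ?thesis by blast
qed

lemma trap_disjoint_attractor:
  assumes Kv: "K \<subseteq> verts g" and T: "trap g P T K" and TS: "T \<inter> S = {}"
  shows "T \<inter> attractor g (opp P) S K = {}"
proof -
  have "v \<notin> T" if "v \<in> attractor g (opp P) S K" for v
    using that
  proof (induction rule: attractor.induct)
    case (base v)
    then show ?case using TS by blast
  next
    case (own v w)
    then have "\<not> owns g P v" using Kv owns_opp[of v g P] by blast
    then show ?case using T own.hyps(3,4) own.IH unfolding trap_def by blast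
  next
    case (other v)
    then have "owns g P v" using Kv owns_opp[of v g P] by blast
    then show ?case using T other.IH unfolding trap_def by blast
  qed
  then show ?thesis by blast
qed

lemma trap_compl_attractor:
  assumes "K \<subseteq> verts g"
  shows "trap g P (K - attractor g (opp P) S K) K"
  unfolding trap_def
proof (intro conjI ballI impI)
  fix v assume v: "v \<in> K - attractor g (opp P) S K"
  with assms have opp: "owns g (opp P) v \<longleftrightarrow> \<not> owns g P v" by (intro owns_opp) blast
  show "\<exists>w\<in>K - attractor g (opp P) S K. (v, w) \<in> edges g" if "owns g P v"
  proof (rule ccontr)
    assume "\<not> ?thesis"
    then have "\<forall>w\<in>K. (v, w) \<in> edges g \<longrightarrow> w \<in> attractor g (opp P) S K" by blast
    with v that opp have "v \<in> attractor g (opp P) S K" by (intro attractor.other) simp_all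
    with v show False by simp
  qed
  show "w \<in> K - attractor g (opp P) S K" if "\<not> owns g P v" "w \<in> K" "(v, w) \<in> edges g" for w
  proof
    show "w \<notin> attractor g (opp P) S K"
    proof
      assume "w \<in> attractor g (opp P) S K"
      with v that opp have "v \<in> attractor g (opp P) S K" by (intro attractor.own[of v K g _ w]) simp_all
      with v show False by simp
    qed
  qed (use that in simp)
qed blast

lemma attr_eq_attractor:
  assumes sg: "subgame g K"
  shows "attr g P S K = attractor g P S K"
proof (intro equalityI subsetI)
  fix v assume "v \<in> attractor g P S K"
  moreover have "v \<in> K" using calculation attractor_subset[of g P S K] by blast
  ultimately show "v \<in> attr g P S K"
    unfolding attr_iff_forces by (auto elim!: forces_mono[OF attractor_forces[OF sg]])
next
  fix v assume "v \<in> attr g P S K"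
  then obtain \<sigma> where \<sigma>: "strategy g P K \<sigma>"
    and reach: "\<forall>\<rho>. play g K v \<rho> \<and> consistent g P \<sigma> \<rho> \<longrightarrow> (\<exists>i. \<rho> i \<in> S)"
    and vK: "v \<in> K"
    by (auto simp: attr_def)
  show "v \<in> attractor g P S K"
  proof (rule ccontr)
    assume v: "v \<notin> attractor g P S K"
    have "trap g (opp P) (K - attractor g P S K) K"
      using trap_compl_attractor[OF subgame_verts[OF sg], of "opp P" S] by simp
    moreover have "strategy g (opp (opp P)) K \<sigma>" using \<sigma> by simp
    ultimately obtain \<rho> where \<rho>: "play g K v \<rho>" "consistent g P \<sigma> \<rho>"
      and stay: "\<forall>i. \<rho> i \<in> K - attractor g P S K"
      using trap_play[OF sg] v vK by (metis DiffI opp_opp)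
    then obtain i where "\<rho> i \<in> S" using reach by blast
    then show False using stay attractor.base[of "\<rho> i" S K g P] by blast
  qed
qed

lemma trap_imp_closed:
  assumes sg: "subgame g K" and T: "trap g P T K"
  shows "closed g P T K"
proof -
  have "T \<inter> attractor g (opp P) (K - T) K = {}"
    using trap_disjoint_attractor[OF subgame_verts[OF sg] T] by blast
  then have "attractor g (opp P) (K - T) K = K - T"
    using attractor_subset[of g "opp P" "K - T" K] attractor.base[of _ "K - T" K g "opp P"] by blast
  then show ?thesis by (simp add: closed_def attr_eq_attractor[OF sg])
qed

section \<open>Dominions\<close>

lemma dominion_transfer_or_reach:
  assumes sg: "subgame g K" and dom: "dominion g P Z K" and u: "u \<in> Z \<inter> K'"
    and own: "\<And>x w. x \<in> Z \<inter> K' \<Longrightarrow> owns g P x \<Longrightarrow> w \<in> Z \<Longrightarrow> (x, w) \<in> edges g \<Longrightarrow> w \<in> K'"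
    and other: "\<And>x w. x \<in> Z \<inter> K' \<Longrightarrow> \<not> owns g P x \<Longrightarrow> w \<in> K' \<Longrightarrow> (x, w) \<in> edges g
      \<Longrightarrow> w \<in> K \<or> w \<in> E"
  shows "forces g P K' u
    (\<lambda>\<rho>. ((\<forall>i. \<rho> i \<in> Z \<inter> K') \<and> wins g P \<rho>) \<or> (\<exists>k. \<rho> k \<in> E \<and> (\<forall>i<k. \<rho> i \<in> Z \<inter> K')))"
proof -
  obtain \<sigma> where \<sigma>: "strategy g P K \<sigma>"
    and win: "\<forall>\<rho>. play g K u \<rho> \<and> consistent g P \<sigma> \<rho> \<longrightarrow> (\<forall>i. \<rho> i \<in> Z) \<and> wins g P \<rho>"
    using dom u by (auto simp: dominion_def)
  have inZ: "set h \<subseteq> Z" if "consistent_path g K P \<sigma> h" "hd h = u" for h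
    using consistent_path_stays[OF sg \<sigma> that(1)] win that(2) by blast
  show ?thesis unfolding forces_def
  proof (intro exI conjI allI impI)
    show "strategy g P K' (legalize g K' \<sigma>)" by (rule strategy_legalize)
    fix \<rho> assume \<rho>: "play g K' u \<rho> \<and> consistent g P (legalize g K' \<sigma>) \<rho>"
    then have \<rho>0: "\<rho> 0 = u" and \<rho>K': "\<rho> i \<in> K'" and \<rho>E: "(\<rho> i, \<rho> (Suc i)) \<in> edges g" for i
      by (auto simp: play_def)
    have step: "\<rho> (Suc i) \<in> Z \<and> consistent_path g K P \<sigma> (map \<rho> [0..<Suc (Suc i)])
        \<or> \<rho> (Suc i) \<notin> Z \<and> \<rho> (Suc i) \<in> E"
      if p: "consistent_path g K P \<sigma> (map \<rho> [0..<Suc i])" and i: "\<rho> i \<in> Z \<inter> K'" for i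
    proof (cases "owns g P (\<rho> i)")
      case True
      let ?p = "map \<rho> [0..<Suc i]"
      have s: "\<sigma> ?p \<in> K" "(\<rho> i, \<sigma> ?p) \<in> edges g"
        using strategy_move[OF sg \<sigma>, of ?p] p True by (auto simp: consistent_path_def simp del: upt_Suc)
      have p': "consistent_path g K P \<sigma> (?p @ [\<sigma> ?p])"
        using consistent_path_snoc[OF p s(1)] s(2) by (simp del: upt_Suc)
      then have "\<sigma> ?p \<in> Z" using inZ[OF p'] \<rho>0 by (simp del: upt_Suc)
      moreover from this have "\<sigma> ?p \<in> K'" using own i True s by blast
      moreover from this have "\<rho> (Suc i) = \<sigma> ?p"
        using \<rho> True s by (simp add: consistent_def legalize_def del: upt_Suc)
      ultimately show ?thesis using p' by simp
    next
      case False
      then have "\<rho> (Suc i) \<in> K \<or> \<rho> (Suc i) \<in> E" using other i \<rho>K' \<rho>E by blast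
      moreover have "consistent_path g K P \<sigma> (map \<rho> [0..<Suc (Suc i)])" if "\<rho> (Suc i) \<in> K"
        using consistent_path_snoc[OF p that] \<rho>E False by simp
      moreover have "\<rho> (Suc i) \<in> Z" if "consistent_path g K P \<sigma> (map \<rho> [0..<Suc (Suc i)])"
        using inZ[OF that] \<rho>0 by (auto simp del: upt_Suc)
      ultimately show ?thesis using dom by (auto simp: dominion_def)
    qed
    have path: "consistent_path g K P \<sigma> (map \<rho> [0..<Suc i])" if "\<forall>j\<le>i. \<rho> j \<in> Z \<inter> K'" for i
      using that
    proof (induction i)
      case 0
      then show ?case using dom by (auto simp: consistent_path_singleton dominion_def)
    next
      case (Suc i)
      then show ?case using step[of i] by auto
    qed
    show "((\<forall>i. \<rho> i \<in> Z \<inter> K') \<and> wins g P \<rho>) \<or> (\<exists>k. \<rho> k \<in> E \<and> (\<forall>i<k. \<rho> i \<in> Z \<inter> K'))"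
    proof (cases "\<forall>i. \<rho> i \<in> Z \<inter> K'")
      case True
      then have "play g K (\<rho> 0) \<rho>" "consistent g P \<sigma> \<rho>"
        using consistent_path_prefixes_play[of g K P \<sigma> \<rho>] path by blast+
      then show ?thesis using win \<rho>0 True by auto
    next
      case False
      define k where "k = (LEAST i. \<rho> i \<notin> Z \<inter> K')"
      have k: "\<rho> k \<notin> Z \<inter> K'" "\<forall>i<k. \<rho> i \<in> Z \<inter> K'"
        using False LeastI_ex[of "\<lambda>i. \<rho> i \<notin> Z \<inter> K'"] not_less_Least unfolding k_def by blast+
      then obtain k' where k': "k = Suc k'" using u \<rho>0 by (cases k) auto
      then have "\<rho> k \<in> E" using step[OF path[of k']] k \<rho>K' by auto
      then show ?thesis using k by blast
    qed
  qed
qed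

lemma dominion_transfer:
  assumes "subgame g K" "dominion g P Z K"
    and "\<And>x w. x \<in> Z \<inter> K' \<Longrightarrow> owns g P x \<Longrightarrow> w \<in> Z \<Longrightarrow> (x, w) \<in> edges g \<Longrightarrow> w \<in> K'"
    and "\<And>x w. x \<in> Z \<inter> K' \<Longrightarrow> \<not> owns g P x \<Longrightarrow> w \<in> K' \<Longrightarrow> (x, w) \<in> edges g \<Longrightarrow> w \<in> K"
  shows "dominion g P (Z \<inter> K') K'"
  unfolding dominion_iff_forces
proof (intro conjI ballI)
  fix u assume "u \<in> Z \<inter> K'"
  with assms have "forces g P K' u (\<lambda>\<rho>. ((\<forall>i. \<rho> i \<in> Z \<inter> K') \<and> wins g P \<rho>)
      \<or> (\<exists>k. \<rho> k \<in> {} \<and> (\<forall>i<k. \<rho> i \<in> Z \<inter> K')))"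
    by (intro dominion_transfer_or_reach) blast+
  then show "forces g P K' u (\<lambda>\<rho>. (\<forall>i. \<rho> i \<in> Z \<inter> K') \<and> wins g P \<rho>)"
    by (rule forces_mono) blast
qed blast

lemma dominion_subarena:
  assumes "subgame g K" "dominion g P Z K" "Z \<subseteq> K'" "K' \<subseteq> K"
  shows "dominion g P Z K'"
  using dominion_transfer[OF assms(1,2), of K'] assms(3,4) by (simp add: Int_absorb2 subset_iff)

lemma dominion_inter_trap:
  assumes sg: "subgame g K" and dom: "dominion g P Z K" and T: "trap g (opp P) T K"
  shows "dominion g P (Z \<inter> T) T"
proof (rule dominion_transfer[OF sg dom])
  fix x w assume x: "x \<in> Z \<inter> T" and "owns g P x" "w \<in> Z" "(x, w) \<in> edges g"
  moreover have "x \<in> verts g" using x T subgame_verts[OF sg] by (auto simp: trap_def)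
  ultimately show "w \<in> T"
    using T dom owns_opp[of x g "opp P"] unfolding trap_def dominion_def by auto
qed (use T in \<open>auto simp: trap_def\<close>)

lemma dominion_trap_lift:
  assumes sg: "subgame g K" and T: "trap g P T K" and dom: "dominion g P Z T"
  shows "dominion g P Z K"
proof -
  have ZT: "Z \<subseteq> T" and TK: "T \<subseteq> K" using dom T by (auto simp: dominion_def trap_def)
  have "dominion g P (Z \<inter> K) K"
    by (rule dominion_transfer[OF trap_subgame[OF sg T] dom]) (use ZT TK T in \<open>auto simp: trap_def\<close>)
  then show ?thesis using ZT TK by (simp add: Int_absorb2)
qed

definition switch_on :: "'v set \<Rightarrow> ('v list \<Rightarrow> 'v) \<Rightarrow> ('v \<Rightarrow> 'v list \<Rightarrow> 'v) \<Rightarrow> 'v list \<Rightarrow> 'v" where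
  "switch_on Z \<sigma> S h =
     (if \<exists>k<length h. h ! k \<in> Z
      then S (h ! (LEAST k. h ! k \<in> Z)) (drop (LEAST k. h ! k \<in> Z) h) else \<sigma> h)"

lemma switch_on_before:
  "\<forall>j\<le>i. \<rho> j \<notin> Z \<Longrightarrow> switch_on Z \<sigma> S (map \<rho> [0..<Suc i]) = \<sigma> (map \<rho> [0..<Suc i])"
  by (auto simp: switch_on_def less_Suc_eq_le simp del: upt_Suc)

lemma switch_on_after:
  assumes "\<rho> k \<in> Z" "\<forall>j<k. \<rho> j \<notin> Z" "k \<le> i"
  shows "switch_on Z \<sigma> S (map \<rho> [0..<Suc i]) = S (\<rho> k) (map (\<lambda>j. \<rho> (j + k)) [0..<Suc (i - k)])"
proof -
  have "(LEAST j. map \<rho> [0..<Suc i] ! j \<in> Z) = k"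
  proof (rule Least_equality)
    show "map \<rho> [0..<Suc i] ! k \<in> Z" using assms by (simp del: upt_Suc)
    show "k \<le> j" if "map \<rho> [0..<Suc i] ! j \<in> Z" for j
      using that assms by (cases "j < k") (auto simp del: upt_Suc)
  qed
  moreover have "\<exists>j<length (map \<rho> [0..<Suc i]). map \<rho> [0..<Suc i] ! j \<in> Z"
    using assms by (intro exI[of _ k]) (simp del: upt_Suc)
  ultimately show ?thesis using assms by (simp add: switch_on_def drop_map_upt del: upt_Suc)
qed

lemma reach_before_first_visit:
  assumes sg: "subgame g K" and \<sigma>: "strategy g P K \<sigma>"
    and reach: "\<forall>\<rho>. play g K v \<rho> \<and> consistent g P \<sigma> \<rho> \<longrightarrow>
      (\<forall>i. \<rho> i \<in> Z2) \<or> (\<exists>k. \<rho> k \<in> Z1 \<and> (\<forall>i<k. \<rho> i \<in> Z2))"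
    and path: "consistent_path g K P \<sigma> (map \<rho> [0..<Suc k])" "\<rho> 0 = v"
    and first: "\<forall>j<k. \<rho> j \<notin> Z1"
  shows "\<forall>i<k. \<rho> i \<in> Z2"
proof (intro allI impI)
  fix i assume i: "i < k"
  from consistent_path_extends_to_play[OF sg \<sigma> path(1)]
  obtain \<rho>' where \<rho>': "play g K v \<rho>'" "consistent g P \<sigma> \<rho>'" "\<forall>j\<le>k. \<rho>' j = \<rho> j"
    using path(2) by (auto simp: less_Suc_eq_le simp del: upt_Suc)
  from reach \<rho>' consider "\<forall>i. \<rho>' i \<in> Z2" | k' where "\<rho>' k' \<in> Z1" "\<forall>i<k'. \<rho>' i \<in> Z2"
    by blast
  then have "\<rho>' i \<in> Z2"
  proof cases
    case (2 k')
    then have "k \<le> k'" using first \<rho>'(3) by (metis leI less_imp_le_nat)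
    then show ?thesis using 2 i by simp
  qed simp
  moreover have "\<rho>' i = \<rho> i" using \<rho>'(3) i by simp
  ultimately show "\<rho> i \<in> Z2" by simp
qed

lemma dominion_union_reach:
  assumes sg: "subgame g K" and dom: "dominion g P Z1 K" and Z2: "Z2 \<subseteq> K"
    and reach: "\<And>u. u \<in> Z2 \<Longrightarrow> forces g P K u
      (\<lambda>\<rho>. ((\<forall>i. \<rho> i \<in> Z2) \<and> wins g P \<rho>) \<or> (\<exists>k. \<rho> k \<in> Z1 \<and> (\<forall>i<k. \<rho> i \<in> Z2)))"
  shows "dominion g P (Z1 \<union> Z2) K"
  unfolding dominion_iff_forces
proof (intro conjI ballI)
  show "Z1 \<union> Z2 \<subseteq> K" using dom Z2 by (auto simp: dominion_def)
  fix v assume v: "v \<in> Z1 \<union> Z2"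
  define S where "S z = (SOME \<sigma>. strategy g P K \<sigma> \<and>
    (\<forall>\<rho>. play g K z \<rho> \<and> consistent g P \<sigma> \<rho> \<longrightarrow> (\<forall>i. \<rho> i \<in> Z1) \<and> wins g P \<rho>))" for z
  have S: "strategy g P K (S z) \<and>
      (\<forall>\<rho>. play g K z \<rho> \<and> consistent g P (S z) \<rho> \<longrightarrow> (\<forall>i. \<rho> i \<in> Z1) \<and> wins g P \<rho>)"
    if "z \<in> Z1" for z
  proof -
    have "\<exists>\<sigma>. strategy g P K \<sigma> \<and>
        (\<forall>\<rho>. play g K z \<rho> \<and> consistent g P \<sigma> \<rho> \<longrightarrow> (\<forall>i. \<rho> i \<in> Z1) \<and> wins g P \<rho>)"
      using dom that by (simp add: dominion_def)
    then show ?thesis unfolding S_def by (rule someI_ex)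
  qed
  show "forces g P K v (\<lambda>\<rho>. (\<forall>i. \<rho> i \<in> Z1 \<union> Z2) \<and> wins g P \<rho>)"
  proof (cases "v \<in> Z1")
    case True
    then show ?thesis using S[OF True] unfolding forces_def by blast
  next
    case False
    with v obtain \<sigma> where \<sigma>: "strategy g P K \<sigma>"
      and \<sigma>_reach: "\<forall>\<rho>. play g K v \<rho> \<and> consistent g P \<sigma> \<rho> \<longrightarrow>
        ((\<forall>i. \<rho> i \<in> Z2) \<and> wins g P \<rho>) \<or> (\<exists>k. \<rho> k \<in> Z1 \<and> (\<forall>i<k. \<rho> i \<in> Z2))"
      using reach unfolding forces_def by blast
    have "(\<forall>i. \<rho> i \<in> Z1 \<union> Z2) \<and> wins g P \<rho>"
      if \<rho>: "play g K v \<rho> \<and> consistent g P (legalize g K (switch_on Z1 \<sigma> S)) \<rho>" for \<rho>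
    proof (cases "\<exists>i. \<rho> i \<in> Z1")
      case False
      then have "consistent g P \<sigma> (\<lambda>j. \<rho> (j + 0))"
        using \<rho> by (intro consistent_suffix[OF sg _ _ \<sigma>, where f = "switch_on Z1 \<sigma> S"])
          (auto simp: switch_on_before simp del: upt_Suc)
      then show ?thesis using \<sigma>_reach \<rho> False by auto
    next
      case True
      define k where "k = (LEAST i. \<rho> i \<in> Z1)"
      have k: "\<rho> k \<in> Z1" "\<forall>j<k. \<rho> j \<notin> Z1"
        using True LeastI_ex[of "\<lambda>i. \<rho> i \<in> Z1"] not_less_Least unfolding k_def by blast+
      have "consistent_path g K P \<sigma> (map \<rho> [0..<Suc k])"
        using \<rho> k by (intro consistent_prefix[OF sg _ _ \<sigma>, where f = "switch_on Z1 \<sigma> S"])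
          (auto simp: switch_on_before simp del: upt_Suc)
      then have before: "\<forall>i<k. \<rho> i \<in> Z2"
        using \<rho> k(2) \<sigma>_reach by (intro reach_before_first_visit[OF sg \<sigma>]) (auto simp: play_def)
      have "consistent g P (S (\<rho> k)) (\<lambda>j. \<rho> (j + k))"
        using \<rho> k by (intro consistent_suffix[OF sg _ _ conjunct1[OF S[OF k(1)]],
            where f = "switch_on Z1 \<sigma> S"]) (auto simp: switch_on_after simp del: upt_Suc)
      moreover have "play g K (\<rho> k) (\<lambda>j. \<rho> (j + k))" using \<rho> by (simp add: play_def)
      ultimately have after: "(\<forall>i. \<rho> (i + k) \<in> Z1) \<and> wins g P (\<lambda>i. \<rho> (i + k))"
        using S[OF k(1)] by blast
      have "\<rho> i \<in> Z1 \<union> Z2" for i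
        using before after[THEN conjunct1, rule_format, of "i - k"] by (cases "i < k") auto
      then show ?thesis using after wins_shift by blast
    qed
    then show ?thesis using strategy_legalize unfolding forces_def by blast
  qed
qed

lemma dominion_attractor:
  assumes sg: "subgame g K" and dom: "dominion g P Z K"
  shows "dominion g P (attractor g P Z K) K"
proof -
  let ?A = "attractor g P Z K"
  have "dominion g P (Z \<union> (?A - Z)) K"
  proof (rule dominion_union_reach[OF sg dom])
    show "?A - Z \<subseteq> K" using attractor_subset[of g P Z K] by blast
    fix u assume "u \<in> ?A - Z"
    then have "forces g P K u (\<lambda>\<rho>. \<exists>k. \<rho> k \<in> Z \<and> (\<forall>i\<le>k. \<rho> i \<in> ?A))"
      by (intro attractor_forces[OF sg]) blast
    then show "forces g P K u
        (\<lambda>\<rho>. ((\<forall>i. \<rho> i \<in> ?A - Z) \<and> wins g P \<rho>) \<or> (\<exists>k. \<rho> k \<in> Z \<and> (\<forall>i<k. \<rho> i \<in> ?A - Z)))"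
    proof (rule forces_mono)
      fix \<rho> :: "nat \<Rightarrow> _" assume "\<exists>k. \<rho> k \<in> Z \<and> (\<forall>i\<le>k. \<rho> i \<in> ?A)"
      then obtain k where k: "\<rho> k \<in> Z" "\<forall>i\<le>k. \<rho> i \<in> ?A" by blast
      define k0 where "k0 = (LEAST i. \<rho> i \<in> Z)"
      have k0: "\<rho> k0 \<in> Z" "k0 \<le> k"
        using k(1) unfolding k0_def by (rule LeastI, rule Least_le)
      have "\<rho> i \<in> ?A - Z" if "i < k0" for i
        using not_less_Least[of i "\<lambda>i. \<rho> i \<in> Z"] k(2) k0(2) that unfolding k0_def by simp
      with k0(1) show "((\<forall>i. \<rho> i \<in> ?A - Z) \<and> wins g P \<rho>) \<or> (\<exists>k. \<rho> k \<in> Z \<and> (\<forall>i<k. \<rho> i \<in> ?A - Z))"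
        by blast
    qed
  qed
  moreover have "Z \<subseteq> ?A" using dom attractor.base[of _ Z K g P] by (auto simp: dominion_def)
  ultimately show ?thesis by (simp add: Un_absorb1)
qed

lemma dominion_finite:
  assumes "parity_game g" "subgame g G" "dominion g P D G"
  shows "finite D"
proof (rule finite_subset)
  show "D \<subseteq> verts g" using assms(2,3) by (auto simp: subgame_def dominion_def)
  show "finite (verts g)" using assms(1) by (simp add: parity_game_def)
qed

lemma dominion_card_le_1_empty:
  assumes game: "parity_game g" and sg: "subgame g G" and dom: "dominion g P D G" and "card D \<le> 1"
  shows "D = {}"
proof (rule ccontr)
  assume "D \<noteq> {}"
  moreover have "finite D" using dominion_finite[OF game sg dom] .
  ultimately obtain x where D: "D = {x}" using \<open>card D \<le> 1\<close> by (metis card_0_eq card_1_singletonE le_antisym less_one not_le)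
  have T: "trap g P {x} G" using dominion_imp_trap[OF sg dom] D by simp
  have "(x, x) \<in> edges g"
  proof (cases "owns g P x")
    case True
    then show ?thesis using T by (auto simp: trap_def)
  next
    case False
    obtain w where "w \<in> G" "(x, w) \<in> edges g" using subgame_successor[OF sg] T by (auto simp: trap_def)
    then show ?thesis using T False by (auto simp: trap_def)
  qed
  then show False using game by (simp add: parity_game_def)
qed

section \<open>Dominions avoiding the attractor of the top priority\<close>

lemma inf_max_prio_eqI:
  assumes fin: "finite K" and inK: "\<forall>i. \<rho> i \<in> K" and le: "\<forall>v\<in>K. prio g v \<le> d"
    and inf: "infinite {i. prio g (\<rho> i) = d}"
  shows "inf_max_prio g \<rho> = d"
proof -
  let ?M = "{prio g v | v. infinite {i. \<rho> i = v}}"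
  have "{i. prio g (\<rho> i) = d} = (\<Union>v\<in>{v\<in>K. prio g v = d}. {i. \<rho> i = v})" using inK by blast
  then obtain v where v: "prio g v = d" "infinite {i. \<rho> i = v}" using inf fin by auto
  have M: "?M \<subseteq> prio g ` K"
  proof
    fix x assume "x \<in> ?M"
    then obtain w where "x = prio g w" "infinite {i. \<rho> i = w}" by blast
    then show "x \<in> prio g ` K" using inK not_finite_existsD by fastforce
  qed
  have "finite ?M" using finite_subset[OF M] fin by blast
  then have "Max ?M = d"
    by (rule Max_eqI) (use M le v in auto)
  then show ?thesis unfolding inf_max_prio_def .
qed

lemma consistent_path_extend:
  assumes sg: "subgame g K" and \<sigma>: "strategy g P K \<sigma>" and h: "consistent_path g K P \<sigma> h"
  shows "consistent_path g K P \<sigma> (h @ [legalize g K \<sigma> h])"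
proof -
  have h': "h \<noteq> []" "set h \<subseteq> K" using h by (auto simp: consistent_path_def)
  then have "\<exists>w\<in>K. (last h, w) \<in> edges g" using subgame_successor[OF sg] last_in_set by blast
  then show ?thesis
    using legalize_move[of K h g \<sigma>] legalize_strategy[OF sg \<sigma> h']
    by (intro consistent_path_snoc[OF h]) auto
qed

lemma consistent_path_reaches_attractor_target:
  assumes sg: "subgame g K" and \<tau>: "strategy g Q K \<tau>" and h: "consistent_path g K Q \<tau> h"
    and A: "last h \<in> attractor g (opp Q) N K"
  shows "\<exists>ys. consistent_path g K Q \<tau> (h @ ys) \<and> last (h @ ys) \<in> N"
  using A h
proof (induction "last h" arbitrary: h rule: attractor.induct)
  case base
  then show ?case by (intro exI[of _ "[]"]) simp
next
  case (own w h)
  have "\<not> owns g Q (last h)"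
    using own.hyps(1,2) subgame_verts[OF sg] owns_opp[of "last h" g Q] by auto
  then have "consistent_path g K Q \<tau> (h @ [w])"
    using own.hyps own.prems by (intro consistent_path_snoc) auto
  then obtain ys where "consistent_path g K Q \<tau> (h @ [w] @ ys)" "last (h @ [w] @ ys) \<in> N"
    using own(6)[of "h @ [w]"] by auto
  then show ?case by (intro exI[of _ "[w] @ ys"]) simp
next
  case (other h)
  have own: "owns g Q (last h)"
    using other.hyps(1,2) subgame_verts[OF sg] owns_opp[of "last h" g Q] by auto
  have "h \<noteq> []" "set h \<subseteq> K" using other.prems by (auto simp: consistent_path_def)
  then have w: "\<tau> h \<in> K" "(last h, \<tau> h) \<in> edges g" using strategy_move[OF sg \<tau>] own by auto
  then have path: "consistent_path g K Q \<tau> (h @ [\<tau> h])"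
    using other.prems by (intro consistent_path_snoc) auto
  have IH: "\<forall>x. \<tau> h = last x \<longrightarrow> consistent_path g K Q \<tau> x \<longrightarrow>
      (\<exists>ys. consistent_path g K Q \<tau> (x @ ys) \<and> last (x @ ys) \<in> N)"
    using other(3) w by blast
  obtain ys where "consistent_path g K Q \<tau> (h @ [\<tau> h] @ ys)" "last (h @ [\<tau> h] @ ys) \<in> N"
    using IH[rule_format, of "h @ [\<tau> h]"] path by (metis append.assoc last_snoc)
  then show ?case by (intro exI[of _ "[\<tau> h] @ ys"]) simp
qed

lemma infinite_extension_chain:
  assumes start: "h0 \<in> T" "h0 \<noteq> []" and take: "\<And>h n. h \<in> T \<Longrightarrow> 0 < n \<Longrightarrow> take n h \<in> T"
    and extend: "\<And>h. h \<in> T \<Longrightarrow> \<exists>ys. ys \<noteq> [] \<and> h @ ys \<in> T \<and> Q (last (h @ ys))"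
  obtains \<rho> where "\<And>n. map \<rho> [0..<Suc n] \<in> T" "infinite {i. Q (\<rho> i)}"
proof -
  define next_ext where "next_ext h = h @ (SOME ys. ys \<noteq> [] \<and> h @ ys \<in> T \<and> Q (last (h @ ys)))" for h
  have next_ext: "\<exists>ys. next_ext h = h @ ys \<and> length h < length (next_ext h) \<and> next_ext h \<in> T
      \<and> Q (last (next_ext h))" if "h \<in> T" for h
    using someI_ex[OF extend[OF that]] unfolding next_ext_def by auto
  define chain where "chain n = (next_ext ^^ n) h0" for n
  have chain_Suc: "chain (Suc n) = next_ext (chain n)" for n by (simp add: chain_def)
  have inT: "chain n \<in> T" for n
    by (induction n) (use start(1) next_ext in \<open>auto simp: chain_def\<close>)
  have long: "n < length (chain n)" for n
  proof (induction n)
    case 0 show ?case using start(2) by (simp add: chain_def)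
  next
    case (Suc n) then show ?case using next_ext[OF inT[of n]] chain_Suc[of n] by auto
  qed
  have prefix: "\<exists>ys. chain m = chain n @ ys" if "n \<le> m" for n m
    using that
  proof (induction m)
    case (Suc m)
    then show ?case
      using next_ext[OF inT[of m]] chain_Suc[of m] by (cases "n = Suc m") (auto simp: le_Suc_eq)
  qed simp
  define \<rho> where "\<rho> i = chain i ! i" for i
  have \<rho>: "\<rho> j = chain n ! j" if "j < length (chain n)" for j n
  proof (cases "j \<le> n")
    case True
    then obtain ys where "chain n = chain j @ ys" using prefix by blast
    then show ?thesis using long[of j] by (simp add: \<rho>_def nth_append)
  next
    case False
    then obtain ys where "chain j = chain n @ ys" using prefix[of n j] by auto
    then show ?thesis using that by (simp add: \<rho>_def nth_append)
  qed
  have "map \<rho> [0..<Suc n] = take (Suc n) (chain n)" for n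
    by (rule nth_equalityI) (use long[of n] \<rho> in \<open>auto simp del: upt_Suc\<close>)
  then have "map \<rho> [0..<Suc n] \<in> T" for n using take[OF inT] by simp
  moreover have "infinite {i. Q (\<rho> i)}" unfolding infinite_nat_iff_unbounded
  proof
    fix m
    let ?i = "length (chain (Suc m)) - 1"
    have "chain (Suc m) \<noteq> []" using long[of "Suc m"] by auto
    then have "\<rho> ?i = last (chain (Suc m))" using \<rho>[of ?i "Suc m"] by (simp add: last_conv_nth)
    moreover have "Q (last (chain (Suc m)))" using next_ext[OF inT[of m]] chain_Suc[of m] by simp
    moreover have "m < ?i" using long[of "Suc m"] by simp
    ultimately show "\<exists>n>m. n \<in> {i. Q (\<rho> i)}" by auto
  qed
  ultimately show ?thesis using that by blast
qed

lemma consistent_play_after_history: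
  assumes "\<And>i. consistent_path g K P \<sigma> (hs @ map \<rho> [0..<Suc i])"
  obtains \<rho>' where "play g K (hd (hs @ [\<rho> 0])) \<rho>'" "consistent g P \<sigma> \<rho>'"
    "(\<lambda>i. \<rho>' (i + length hs)) = \<rho>"
proof -
  define \<rho>' where "\<rho>' j = (if j < length hs then hs ! j else \<rho> (j - length hs))" for j
  have "consistent_path g K P \<sigma> (map \<rho>' [0..<Suc n])" for n
  proof -
    have "map \<rho>' [0..<Suc n] = take (Suc n) (hs @ map \<rho> [0..<Suc n])"
      by (rule nth_equalityI) (simp_all add: \<rho>'_def nth_append del: upt_Suc)
    then show ?thesis using consistent_path_take[OF assms, of "Suc n"] by (simp del: upt_Suc)
  qed
  then have "play g K (\<rho>' 0) \<rho>'" "consistent g P \<sigma> \<rho>'" by (rule consistent_path_prefixes_play)+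
  moreover have "\<rho>' 0 = hd (hs @ [\<rho> 0])" by (cases hs) (auto simp: \<rho>'_def)
  moreover have "(\<lambda>i. \<rho>' (i + length hs)) = \<rho>" by (simp add: \<rho>'_def)
  ultimately show ?thesis using that by simp
qed

lemma dominion_of_history:
  assumes sg: "subgame g K" and \<tau>: "strategy g Q K \<tau>"
    and win: "\<forall>\<rho>. play g K (hd h0) \<rho> \<and> consistent g Q \<tau> \<rho> \<longrightarrow> wins g Q \<rho>"
    and h0: "consistent_path g K Q \<tau> h0"
    and avoid: "\<And>ys. consistent_path g K Q \<tau> (h0 @ ys) \<Longrightarrow> last (h0 @ ys) \<notin> A"
  shows "dominion g Q {last (h0 @ ys) | ys. consistent_path g K Q \<tau> (h0 @ ys)} (K - A)"
    (is "dominion g Q ?R (K - A)")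
  unfolding dominion_iff_forces
proof (intro conjI ballI)
  show "?R \<subseteq> K - A"
  proof
    fix x assume "x \<in> ?R"
    then obtain ys where x: "x = last (h0 @ ys)" and p: "consistent_path g K Q \<tau> (h0 @ ys)" by blast
    then have "x \<in> K" using p last_in_set[of "h0 @ ys"] by (auto simp: consistent_path_def)
    then show "x \<in> K - A" using avoid[OF p] x by blast
  qed
  fix u assume "u \<in> ?R"
  then obtain ys0 where h': "consistent_path g K Q \<tau> (h0 @ ys0)" and u: "last (h0 @ ys0) = u" by blast
  define hs where "hs = butlast (h0 @ ys0)"
  have "h0 @ ys0 \<noteq> []" using h' by (simp add: consistent_path_def)
  then have hs_u: "hs @ [u] = h0 @ ys0" unfolding hs_def u[symmetric] by (rule append_butlast_last_id)
  define \<sigma> where "\<sigma> = legalize g (K - A) (\<lambda>k. \<tau> (hs @ k))"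
  have "(\<forall>i. \<rho> i \<in> ?R) \<and> wins g Q \<rho>" if \<rho>: "play g (K - A) u \<rho>" "consistent g Q \<sigma> \<rho>" for \<rho>
  proof -
    have hist: "\<exists>ys. hs @ map \<rho> [0..<Suc i] = h0 @ ys
        \<and> consistent_path g K Q \<tau> (hs @ map \<rho> [0..<Suc i])" for i
    proof (induction i)
      case 0
      then show ?case using \<rho>(1) hs_u h' by (auto simp: play_def)
    next
      case (Suc i)
      let ?h = "hs @ map \<rho> [0..<Suc i]"
      obtain ys where ys: "?h = h0 @ ys" and p: "consistent_path g K Q \<tau> ?h" using Suc.IH by blast
      have "consistent_path g K Q \<tau> (?h @ [\<rho> (Suc i)])"
      proof (cases "owns g Q (\<rho> i)")
        case True
        have "?h \<noteq> []" "set ?h \<subseteq> K" using p by (auto simp: consistent_path_def simp del: upt_Suc)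
        moreover have "last ?h = \<rho> i" by (simp add: last_append del: upt_Suc)
        ultimately have t: "\<tau> ?h \<in> K" "(\<rho> i, \<tau> ?h) \<in> edges g"
          using strategy_move[OF sg \<tau>, of ?h] True by auto
        then have p': "consistent_path g K Q \<tau> (?h @ [\<tau> ?h])"
          by (intro consistent_path_snoc[OF p]) (simp_all del: upt_Suc)
        then have "\<tau> ?h \<notin> A" using avoid[of "ys @ [\<tau> ?h]"] ys by (simp del: upt_Suc)
        then have "\<rho> (Suc i) = \<tau> ?h"
          using \<rho>(2) True t by (simp add: consistent_def \<sigma>_def legalize_def del: upt_Suc)
        then show ?thesis using p' by simp
      next
        case False
        then show ?thesis
          using \<rho>(1) by (intro consistent_path_snoc[OF p]) (auto simp: play_def simp del: upt_Suc)
      qed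
      then show ?case using ys by (intro exI[of _ "ys @ [\<rho> (Suc i)]"]) simp
    qed
    have "\<rho> i \<in> ?R" for i
    proof -
      obtain ys where "hs @ map \<rho> [0..<Suc i] = h0 @ ys" "consistent_path g K Q \<tau> (h0 @ ys)"
        using hist[of i] by auto
      moreover have "last (hs @ map \<rho> [0..<Suc i]) = \<rho> i" by (simp add: last_append del: upt_Suc)
      ultimately show ?thesis by force
    qed
    moreover obtain \<rho>' where "play g K (hd (hs @ [\<rho> 0])) \<rho>'" "consistent g Q \<tau> \<rho>'"
      and suffix: "(\<lambda>i. \<rho>' (i + length hs)) = \<rho>"
      using consistent_play_after_history[of g K Q \<tau> hs \<rho>] hist by blast
    moreover have "hd (hs @ [\<rho> 0]) = hd h0"
      using hs_u \<rho>(1) h0 by (simp add: play_def consistent_path_def hd_append2)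
    ultimately show ?thesis using win wins_shift[of g Q \<rho>' "length hs"] by auto
  qed
  then show "forces g Q (K - A) u (\<lambda>\<rho>. (\<forall>i. \<rho> i \<in> ?R) \<and> wins g Q \<rho>)"
    using strategy_legalize unfolding forces_def \<sigma>_def by blast
qed

lemma top_attractor_visited_infinitely:
  assumes sg: "subgame g K" and \<tau>: "strategy g Q K \<tau>" and v: "v \<in> K"
    and reach: "\<And>h. consistent_path g K Q \<tau> h \<Longrightarrow> hd h = v \<Longrightarrow>
      \<exists>ys. consistent_path g K Q \<tau> (h @ ys) \<and> last (h @ ys) \<in> attractor g (opp Q) N K"
  obtains \<rho> where "play g K v \<rho>" "consistent g Q \<tau> \<rho>" "infinite {i. \<rho> i \<in> N}"
proof -
  define T where "T = {h. consistent_path g K Q \<tau> h \<and> hd h = v}"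
  have T_append: "h @ ys \<in> T" if "h \<in> T" "consistent_path g K Q \<tau> (h @ ys)" for h ys
    using that by (auto simp: T_def consistent_path_def)
  have "\<exists>ys. ys \<noteq> [] \<and> h @ ys \<in> T \<and> last (h @ ys) \<in> N" if h: "h \<in> T" for h
  proof -
    let ?w = "legalize g K \<tau> h"
    have "h @ [?w] \<in> T"
      using h consistent_path_extend[OF sg \<tau>] T_append by (simp add: T_def)
    then have "\<exists>ys. consistent_path g K Q \<tau> ((h @ [?w]) @ ys)
        \<and> last ((h @ [?w]) @ ys) \<in> attractor g (opp Q) N K"
      using reach[of "h @ [?w]"] by (simp add: T_def)
    then obtain ys where "consistent_path g K Q \<tau> (h @ [?w] @ ys)"
      "last (h @ [?w] @ ys) \<in> attractor g (opp Q) N K"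
      by auto
    then obtain zs where "consistent_path g K Q \<tau> (h @ [?w] @ ys @ zs)" "last (h @ [?w] @ ys @ zs) \<in> N"
      using consistent_path_reaches_attractor_target[OF sg \<tau>, of "h @ [?w] @ ys"] by auto
    then show ?thesis using T_append[OF h] by (intro exI[of _ "[?w] @ ys @ zs"]) auto
  qed
  moreover have "[v] \<in> T" using v consistent_path_singleton[of v K g Q \<tau>] by (auto simp: T_def)
  moreover have "take n h \<in> T" if "h \<in> T" "0 < n" for h n
    using that consistent_path_take[of g K Q \<tau> h n] by (cases h) (auto simp: T_def)
  ultimately obtain \<rho> where \<rho>: "\<And>n. map \<rho> [0..<Suc n] \<in> T" and inf: "infinite {i. \<rho> i \<in> N}"
    using infinite_extension_chain[of "[v]" T "\<lambda>x. x \<in> N"] by blast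
  have "play g K (\<rho> 0) \<rho>" "consistent g Q \<tau> \<rho>"
    using \<rho> consistent_path_prefixes_play[of g K Q \<tau> \<rho>] by (simp_all add: T_def)
  moreover have "\<rho> 0 = v" using \<rho>[of 0] by (simp add: T_def)
  ultimately show ?thesis using that inf by simp
qed

text \<open>If every history of \<open>Q\<close>'s winning strategy could be steered into the opponent's
  attractor of priority \<open>d\<close>, the opponent would force \<open>d\<close> infinitely often. So some history
  cannot be, and the positions reachable after it form the dominion.\<close>

lemma dominion_outside_top_attractor:
  assumes sg: "subgame g K" and fin: "finite K" and le: "\<forall>v\<in>K. prio g v \<le> d"
    and top: "\<And>\<rho>. inf_max_prio g \<rho> = d \<Longrightarrow> \<not> wins g Q \<rho>"
    and dom: "dominion g Q X K" and "X \<noteq> {}"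
  obtains R where "R \<noteq> {}" "R \<subseteq> X"
    "dominion g Q R (K - attractor g (opp Q) {v \<in> K. prio g v = d} K)"
proof -
  let ?N = "{v \<in> K. prio g v = d}"
  let ?A = "attractor g (opp Q) ?N K"
  obtain v where v: "v \<in> X" using assms by blast
  then obtain \<tau> where \<tau>: "strategy g Q K \<tau>"
    and win: "\<forall>\<rho>. play g K v \<rho> \<and> consistent g Q \<tau> \<rho> \<longrightarrow> (\<forall>i. \<rho> i \<in> X) \<and> wins g Q \<rho>"
    using dom by (auto simp: dominion_def)
  have XK: "X \<subseteq> K" using dom by (simp add: dominion_def)
  show ?thesis
  proof (cases "\<exists>h0. consistent_path g K Q \<tau> h0 \<and> hd h0 = v \<and>
      (\<forall>ys. consistent_path g K Q \<tau> (h0 @ ys) \<longrightarrow> last (h0 @ ys) \<notin> ?A)")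
    case True
    then obtain h0 where h0: "consistent_path g K Q \<tau> h0" "hd h0 = v"
      and avoid: "\<And>ys. consistent_path g K Q \<tau> (h0 @ ys) \<Longrightarrow> last (h0 @ ys) \<notin> ?A"
      by blast
    have hd: "hd (h0 @ ys) = v" for ys using h0 by (simp add: consistent_path_def hd_append2)
    let ?R = "{last (h0 @ ys) | ys. consistent_path g K Q \<tau> (h0 @ ys)}"
    have "\<forall>\<rho>. play g K (hd h0) \<rho> \<and> consistent g Q \<tau> \<rho> \<longrightarrow> wins g Q \<rho>"
      using win h0(2) by blast
    then have dom_R: "dominion g Q ?R (K - ?A)" using dominion_of_history[OF sg \<tau> _ h0(1) avoid] by blast
    have "last (h0 @ []) \<in> ?R" using h0(1) by (intro CollectI exI[of _ "[]"]) simp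
    then have ne: "?R \<noteq> {}" by blast
    have sub: "?R \<subseteq> X"
    proof
      fix x assume "x \<in> ?R"
      then obtain ys where x: "x = last (h0 @ ys)" and p: "consistent_path g K Q \<tau> (h0 @ ys)" by blast
      then have "set (h0 @ ys) \<subseteq> X"
        using consistent_path_stays[OF sg \<tau> p, of X] win unfolding hd by blast
      moreover have "h0 @ ys \<noteq> []" using p by (simp add: consistent_path_def)
      ultimately show "x \<in> X" using x last_in_set by blast
    qed
    show ?thesis by (rule that[OF ne sub dom_R])
  next
    case False
    then have "\<exists>ys. consistent_path g K Q \<tau> (h @ ys) \<and> last (h @ ys) \<in> ?A"
      if "consistent_path g K Q \<tau> h" "hd h = v" for h
      using that by blast
    then obtain \<rho> where \<rho>: "play g K v \<rho>" "consistent g Q \<tau> \<rho>" and inf: "infinite {i. \<rho> i \<in> ?N}"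
      using top_attractor_visited_infinitely[OF sg \<tau>, of v ?N] v XK by blast
    then have "(\<forall>i. \<rho> i \<in> X) \<and> wins g Q \<rho>" using win by blast
    moreover have "infinite {i. prio g (\<rho> i) = d}"
      using inf by (rule infinite_super[rotated]) blast
    then have "inf_max_prio g \<rho> = d"
      using calculation XK by (intro inf_max_prio_eqI[OF fin _ le]) blast+
    ultimately show ?thesis using top by simp
  qed
qed

lemma subgame_compl_attractor: "subgame g K \<Longrightarrow> subgame g (K - attractor g P S K)"
  using trap_subgame trap_compl_attractor[OF subgame_verts, of g K "opp P" S] by simp

lemma dominion_growth:
  assumes sg: "subgame g G" and fin: "finite D" and le: "\<forall>v\<in>D. prio g v \<le> d"
    and top: "\<And>\<rho>. inf_max_prio g \<rho> = d \<Longrightarrow> \<not> wins g Q \<rho>"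
    and D: "dominion g Q D G" and Di: "dominion g Q Di D" "attractor g Q Di D = Di" "Di \<noteq> D"
  obtains R where "R \<noteq> {}" "R \<subseteq> D - Di" "\<forall>v\<in>R. prio g v \<noteq> d"
    "dominion g Q R (D - Di)" "dominion g Q (Di \<union> R) D"
proof -
  have sgD: "subgame g D" using trap_subgame[OF sg dominion_imp_trap[OF sg D]] .
  have DG: "D \<subseteq> G" and DiD: "Di \<subseteq> D" using D Di by (auto simp: dominion_def)
  let ?K = "D - Di"
  let ?N = "{v \<in> ?K. prio g v = d}"
  let ?A = "attractor g (opp Q) ?N ?K"
  have K: "trap g (opp Q) ?K D"
    using trap_compl_attractor[OF subgame_verts[OF sgD], of "opp Q" Di] Di(2) by simp
  have sgK: "subgame g ?K" using trap_subgame[OF sgD K] .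
  have "dominion g Q (D \<inter> ?K) ?K"
    using dominion_inter_trap[OF sgD dominion_subarena[OF sg D order_refl DG] K] .
  then have KK: "dominion g Q ?K ?K" by (simp add: Int_absorb1)
  obtain R where R: "R \<noteq> {}" "R \<subseteq> ?K" and RM: "dominion g Q R (?K - ?A)"
    using dominion_outside_top_attractor[OF sgK _ _ top KK] fin le Di(3) DiD by blast
  have "trap g Q (?K - ?A) ?K" using trap_compl_attractor[OF subgame_verts[OF sgK], of Q ?N] by simp
  then have RK: "dominion g Q R ?K" using dominion_trap_lift[OF sgK _ RM] by blast
  have "R \<subseteq> ?K - ?A" using RM by (simp add: dominion_def)
  then have "\<forall>v\<in>R. prio g v \<noteq> d" using attractor.base[of _ ?N ?K g "opp Q"] by blast
  moreover have "dominion g Q (Di \<union> R) D"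
  proof (rule dominion_union_reach[OF sgD Di(1)])
    show "R \<subseteq> D" using R by blast
    fix u assume "u \<in> R"
    then have "forces g Q D u (\<lambda>\<rho>. ((\<forall>i. \<rho> i \<in> R \<inter> D) \<and> wins g Q \<rho>)
        \<or> (\<exists>k. \<rho> k \<in> Di \<and> (\<forall>i<k. \<rho> i \<in> R \<inter> D)))"
      using R by (intro dominion_transfer_or_reach[OF sgK RK]) auto
    moreover have "R \<inter> D = R" using R by blast
    ultimately show "forces g Q D u (\<lambda>\<rho>. ((\<forall>i. \<rho> i \<in> R) \<and> wins g Q \<rho>)
        \<or> (\<exists>k. \<rho> k \<in> Di \<and> (\<forall>i<k. \<rho> i \<in> R)))"
      by simp
  qed
  ultimately show ?thesis using that R RK by blast
qed

section \<open>Correctness of Algorithm 1\<close>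

definition separates :: "'v pgame \<Rightarrow> player \<Rightarrow> 'v set \<Rightarrow> nat \<Rightarrow> nat \<Rightarrow> 'v set \<Rightarrow> bool" where
  "separates g P G pme pop S \<longleftrightarrow> trap g P S G \<and>
     (\<forall>D. dominion g P D G \<and> card D \<le> pme \<longrightarrow> D \<subseteq> S) \<and>
     (\<forall>D. dominion g (opp P) D G \<and> card D \<le> pop \<longrightarrow> D \<inter> S = {})"

locale solve_step =
  fixes g :: "'v pgame" and P :: player and G G1 H W G2 G3 :: "'v set" and d pme pop :: nat
  assumes game: "parity_game g" and sg: "subgame g G" and le: "\<forall>v\<in>G. prio g v \<le> d"
    and top: "\<And>\<rho>. inf_max_prio g \<rho> = d \<Longrightarrow> \<not> wins g (opp P) \<rho>"
    and G1: "separates g P G pme (pop div 2) G1"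
    and H: "H = G1 - attr g P {v \<in> G1. prio g v = d} G1"
    and W: "separates g (opp P) H pop pme W"
    and G2: "G2 = G1 - attr g (opp P) W G1"
    and G3: "separates g P G2 pme (pop div 2) G3"
begin

lemma G1_trap: "trap g P G1 G"
  using G1 by (simp add: separates_def)

lemma G1_subgame: "subgame g G1"
  using trap_subgame[OF sg G1_trap] .

lemma G1_verts: "G1 \<subseteq> verts g"
  using subgame_verts[OF G1_subgame] .

lemma H_trap: "trap g (opp P) H G1"
  using trap_compl_attractor[OF G1_verts, of "opp P"] by (simp add: H attr_eq_attractor[OF G1_subgame])

lemma W_subset: "W \<subseteq> H"
  using W by (simp add: separates_def trap_def)

lemma G2_trap: "trap g P G2 G1"
  using trap_compl_attractor[OF G1_verts, of P] by (simp add: G2 attr_eq_attractor[OF G1_subgame])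

lemma G3_trap: "trap g P G3 G2"
  using G3 by (simp add: separates_def)

lemma G3_trap_G: "trap g P G3 G"
  using trap_trans[OF G3_trap trap_trans[OF G2_trap G1_trap]] .

lemma contains_small_dominion:
  assumes D: "dominion g P D G" "card D \<le> pme"
  shows "D \<subseteq> G3"
proof -
  have "D \<subseteq> G1" using G1 D by (simp add: separates_def)
  then have D1: "dominion g P D G1" using dominion_subarena[OF sg D(1)] trap_subset[OF G1_trap] by blast
  have "dominion g P (D \<inter> H) H" using dominion_inter_trap[OF G1_subgame D1 H_trap] .
  moreover have "card (D \<inter> H) \<le> pme"
    using D(2) card_mono[OF dominion_finite[OF game sg D(1)], of "D \<inter> H"] by simp
  ultimately have "D \<inter> H \<inter> W = {}" using W by (simp add: separates_def)
  then have "D \<inter> W = {}" using W_subset by blast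
  then have "D \<inter> attractor g (opp P) W G1 = {}"
    using trap_disjoint_attractor[OF G1_verts dominion_imp_trap[OF G1_subgame D1]] by blast
  then have "D \<subseteq> G2" using \<open>D \<subseteq> G1\<close> by (auto simp: G2 attr_eq_attractor[OF G1_subgame])
  then have "dominion g P D G2" using dominion_subarena[OF G1_subgame D1] trap_subset[OF G2_trap] by blast
  then show ?thesis using G3 D(2) by (simp add: separates_def)
qed

lemma avoids_after_large_growth:
  assumes D: "dominion g (opp P) D G" "card D \<le> pop"
    and Di: "attractor g (opp P) Di D = Di" "Di \<inter> G1 = {}"
    and R: "R \<subseteq> D - Di" "\<forall>v\<in>R. prio g v \<noteq> d" "dominion g (opp P) R (D - Di)"
    and large: "pop div 2 < card (attractor g (opp P) (Di \<union> R) D)"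
  shows "D \<inter> G3 = {}"
proof -
  have DT: "trap g (opp P) D G" using dominion_imp_trap[OF sg D(1)] .
  have sgD: "subgame g D" using trap_subgame[OF sg DT] .
  have sgK: "subgame g (D - Di)" using subgame_compl_attractor[OF sgD, of "opp P" Di] Di(1) by simp
  have DG: "D \<subseteq> G" and G1G: "G1 \<subseteq> G" using trap_subset[OF DT] trap_subset[OF G1_trap] .
  have "dominion g (opp P) (R \<inter> G1) G1"
  proof (rule dominion_transfer[OF sgK R(3)])
    fix x w assume x: "x \<in> R \<inter> G1" "owns g (opp P) x" and w: "w \<in> R" "(x, w) \<in> edges g"
    then have "\<not> owns g P x" using G1_verts owns_opp[of x g P] by blast
    then show "w \<in> G1" using G1_trap x w R(1) DG unfolding trap_def by blast
  next
    fix x w assume x: "x \<in> R \<inter> G1" "\<not> owns g (opp P) x" and w: "w \<in> G1" "(x, w) \<in> edges g"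
    then have "w \<in> D" using DT R(1) G1G unfolding trap_def by blast
    then show "w \<in> D - Di" using w Di(2) by blast
  qed
  then have RG1: "dominion g (opp P) (R \<inter> G1) G1" by simp
  have "(R \<inter> G1) \<inter> attractor g (opp (opp P)) {v \<in> G1. prio g v = d} G1 = {}"
    using R(2) by (intro trap_disjoint_attractor[OF G1_verts dominion_imp_trap[OF G1_subgame RG1]]) blast
  then have "R \<inter> G1 \<subseteq> H" by (auto simp: H attr_eq_attractor[OF G1_subgame])
  then have "dominion g (opp P) (R \<inter> G1) H" using dominion_subarena[OF G1_subgame RG1] H by blast
  moreover have "card (R \<inter> G1) \<le> card D"
    using R(1) by (intro card_mono[OF dominion_finite[OF game sg D(1)]]) blast
  ultimately have RW: "R \<inter> G1 \<subseteq> W" using W D(2) by (simp add: separates_def)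
  let ?D' = "attractor g (opp P) (Di \<union> R) D"
  have "trap g P (G2 \<inter> D) D"
    using trap_inter[OF subgame_verts[OF sg] trap_trans[OF G2_trap G1_trap], of D] DT by simp
  moreover have "(G2 \<inter> D) \<inter> (Di \<union> R) = {}"
    using Di(2) RW attractor.base[of _ W G1 g "opp P"] trap_subset[OF G2_trap]
    by (auto simp: G2 attr_eq_attractor[OF G1_subgame])
  ultimately have "(G2 \<inter> D) \<inter> ?D' = {}" using trap_disjoint_attractor[OF subgame_verts[OF sgD]] by blast
  then have "card (D \<inter> G2) \<le> card (D - ?D')"
    using dominion_finite[OF game sg D(1)] by (intro card_mono) auto
  also have "\<dots> = card D - card ?D'"
    using dominion_finite[OF game sg D(1)] attractor_subset[of g "opp P" "Di \<union> R" D]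
    by (intro card_Diff_subset) (auto intro: finite_subset)
  also have "\<dots> \<le> pop div 2" using large D(2) by linarith
  finally have "card (D \<inter> G2) \<le> pop div 2" .
  moreover have "dominion g (opp P) (D \<inter> G2) G2"
    using dominion_inter_trap[OF sg D(1)] trap_trans[OF G2_trap G1_trap] by simp
  ultimately have "D \<inter> G2 \<inter> G3 = {}" using G3 by (simp add: separates_def)
  then show ?thesis using trap_subset[OF G3_trap] by blast
qed

lemma avoids_small_opponent_dominion:
  assumes D: "dominion g (opp P) D G" "card D \<le> pop"
  shows "D \<inter> G3 = {}"
proof -
  have DT: "trap g (opp P) D G" using dominion_imp_trap[OF sg D(1)] .
  have sgD: "subgame g D" using trap_subgame[OF sg DT] .
  have finD: "finite D" using dominion_finite[OF game sg D(1)] .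
  have leD: "\<forall>v\<in>D. prio g v \<le> d" using le trap_subset[OF DT] by blast
  have "D \<inter> G3 = {}"
    if "dominion g (opp P) Di D" "attractor g (opp P) Di D = Di" "card Di \<le> pop div 2" for Di
    using that
  proof (induction "card (D - Di)" arbitrary: Di rule: less_induct)
    case less
    have Di_G1: "Di \<inter> G1 = {}"
      using G1 dominion_trap_lift[OF sg DT less.prems(1)] less.prems(3) by (simp add: separates_def)
    show ?case
    proof (cases "Di = D")
      case True
      then show ?thesis using Di_G1 trap_subset[OF G3_trap] trap_subset[OF G2_trap] by blast
    next
      case False
      obtain R where R: "R \<noteq> {}" "R \<subseteq> D - Di" "\<forall>v\<in>R. prio g v \<noteq> d"
        "dominion g (opp P) R (D - Di)" "dominion g (opp P) (Di \<union> R) D"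
        using dominion_growth[OF sg finD leD top D(1) less.prems(1,2) False] by blast
      let ?D' = "attractor g (opp P) (Di \<union> R) D"
      show ?thesis
      proof (cases "card ?D' \<le> pop div 2")
        case True
        have "Di \<union> R \<subseteq> ?D'" using R(2) less.prems(1) attractor.base[of _ "Di \<union> R" D g "opp P"]
          by (auto simp: dominion_def)
        then have "D - ?D' \<subset> D - Di" using R(1,2) by blast
        then have "card (D - ?D') < card (D - Di)" using finD by (intro psubset_card_mono) auto
        then show ?thesis
          using less.hyps[OF _ dominion_attractor[OF sgD R(5)] attractor_idem True] by blast
      next
        case False
        then show ?thesis using avoids_after_large_growth[OF D less.prems(2) Di_G1 R(2-4)] by simp
      qed
    qed
  qed
  moreover have "dominion g (opp P) {} D" by (simp add: dominion_def)
  ultimately show ?thesis using attractor_empty[OF sgD] by simp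
qed

lemma separates_step: "separates g P G pme pop G3"
  using G3_trap_G contains_small_dominion avoids_small_opponent_dominion
  by (simp add: separates_def)

end

lemma wins_top_priority:
  "P = (if even d then Even else Odd) \<Longrightarrow> inf_max_prio g \<rho> = d \<Longrightarrow> \<not> wins g (opp P) \<rho>"
  by (auto simp: wins_def)

lemma separates_base:
  assumes game: "parity_game g" and sg: "subgame g G" and le: "\<forall>v\<in>G. prio g v \<le> d"
    and trivial: "G = {} \<or> pop \<le> 1 \<or> d = 0"
  shows "separates g P G pme pop G"
proof -
  have "G = {}" if "d = 0"
    using game le subgame_verts[OF sg] that by (force simp: parity_game_def)
  then have "D = {}" if "dominion g (opp P) D G" "card D \<le> pop" for D
    using trivial dominion_card_le_1_empty[OF game sg that(1)] that by (auto simp: dominion_def)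
  then show ?thesis using trap_refl[OF sg] by (auto simp: separates_def dominion_def)
qed

declare solve.simps [simp del]

lemma solve_separates:
  "parity_game g \<Longrightarrow> subgame g G \<Longrightarrow> \<forall>v\<in>G. prio g v \<le> d \<Longrightarrow> P = (if even d then Even else Odd)
    \<Longrightarrow> separates g P G pme pop (solve g P G d pme pop)"
proof (induction g P G d pme pop rule: solve.induct)
  case (1 g P G d pme pop)
  note game = "1.prems"(1) and sg = "1.prems"(2) and le = "1.prems"(3) and parity = "1.prems"(4)
  show ?case
  proof (cases "G = {} \<or> pop \<le> 1 \<or> d = 0")
    case True
    then show ?thesis using separates_base[OF game sg le True] by (subst solve.simps) simp
  next
    case False
    define G1 where "G1 = solve g P G d pme (pop div 2)"
    define Nd where "Nd = {v \<in> G1. prio g v = d}"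
    define H where "H = G1 - attr g P Nd G1"
    define W where "W = solve g (opp P) H (d - 1) pop pme"
    define G2 where "G2 = G1 - attr g (opp P) W G1"
    define G3 where "G3 = solve g P G2 d pme (pop div 2)"
    have G1: "separates g P G pme (pop div 2) G1"
      using "1.IH"(1)[OF False game sg le parity] unfolding G1_def .
    then have G1G: "trap g P G1 G" by (simp add: separates_def)
    then have sgG1: "subgame g G1" using trap_subgame[OF sg] by blast
    have H_eq: "H = G1 - attractor g P Nd G1" by (simp add: H_def attr_eq_attractor[OF sgG1])
    have leH: "\<forall>v\<in>H. prio g v \<le> d - 1"
      using le trap_subset[OF G1G] attractor.base[of _ Nd G1 g P] by (fastforce simp: H_eq Nd_def)
    have sgH: "subgame g H" using subgame_compl_attractor[OF sgG1] by (simp add: H_eq)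
    have "opp P = (if even (d - 1) then Even else Odd)" using parity False by auto
    then have W: "separates g (opp P) H pop pme W"
      using "1.IH"(2)[OF False G1_def Nd_def H_def game sgH leH] by (simp add: W_def)
    have G2_eq: "G2 = G1 - attractor g (opp P) W G1" by (simp add: G2_def attr_eq_attractor[OF sgG1])
    have G3: "separates g P G2 pme (pop div 2) G3"
      using "1.IH"(3)[OF False G1_def Nd_def H_def W_def G2_def game _ _ parity]
        subgame_compl_attractor[OF sgG1] le trap_subset[OF G1G]
      by (auto simp: G3_def G2_eq)
    interpret solve_step g P G G1 H W G2 G3 d pme pop
      using game sg le wins_top_priority[OF parity] G1 W G3
      by unfold_locales (simp_all add: H_def Nd_def G2_def)
    have "solve g P G d pme pop = G3"
      using False unfolding G3_def G2_def W_def H_def Nd_def G1_def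
      by (subst solve.simps) (simp only: Let_def if_False)
    then show ?thesis using separates_step by simp
  qed
qed

theorem lemma3p2:
  fixes g :: "'v pgame" and G :: "'v set" and d pE pO :: nat
  assumes "parity_game g"
    and "subgame g G"
    and "1 \<le> pE" and "1 \<le> pO"
    and "\<forall>v\<in>G. prio g v \<le> d"
  shows "(even d \<longrightarrow>
            closed g Even (Solve_E g G d pE pO) G \<and>
            (\<forall>D. dominion g Even D G \<and> card D \<le> pE \<longrightarrow> D \<subseteq> Solve_E g G d pE pO) \<and>
            (\<forall>D. dominion g Odd D G \<and> card D \<le> pO \<longrightarrow> D \<inter> Solve_E g G d pE pO = {}))
       \<and> (odd d \<longrightarrow>
            closed g Odd (Solve_O g G d pO pE) G \<and>
            (\<forall>D. dominion g Odd D G \<and> card D \<le> pO \<longrightarrow> D \<subseteq> Solve_O g G d pO pE) \<and>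
            (\<forall>D. dominion g Even D G \<and> card D \<le> pE \<longrightarrow> D \<inter> Solve_O g G d pO pE = {}))"
proof -
  have "separates g Even G pE pO (Solve_E g G d pE pO)" if "even d"
    using solve_separates[OF assms(1,2,5)] that by (simp add: Solve_E_def)
  moreover have "separates g Odd G pO pE (Solve_O g G d pO pE)" if "odd d"
    using solve_separates[OF assms(1,2,5)] that by (simp add: Solve_O_def)
  ultimately show ?thesis
    using trap_imp_closed[OF assms(2)] by (simp add: separates_def)
qed

end
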